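(* Let $\mathcal G=\{U_a\}_{a=1}^{|\mathcal G|}$ be a finite group of unitary operators on a finite-dimensional Hilbert space $\mathcal H_A$, let $\Delta(\rho)=\frac{1}{|\mathcal G|}\sum_{a=1}^{|\mathcal G|}U_a\rho U_a^\dagger$ be the $\mathcal G$-twirling map, and let $\mathcal F(A)=\{\Delta(\rho):\rho\in\mathcal D(\mathcal H_A)\}$. Then $\mathcal F(A)$ is affine, $\Delta$ is a resource-destroying map for $\mathcal F(A)$, and for every $N\ge1$, with $\mathcal F(A_1\dots A_N)=\mathrm{Aff}(\mathcal F(A)^{\otimes N})$, there is no $\rho\in\mathcal D(\mathcal H_A^{\otimes N})$ with $\rho\notin\mathcal F(A_1\dots A_N)$ and $\Delta^{\otimes N}(\rho)=\rho$.
   Context: $\mathcal D(\mathcal H)$ denotes the density operators on $\mathcal H$. For $S\subseteq\mathcal D(\mathcal H)$, $\mathrm{Aff}(S)=\{\sum_a t_a\sigma_a:\ \text{finitely many }\sigma_a\in S,\ t_a\in\mathbb R,\ \sum_a t_a=1\}\cap\mathcal D(\mathcal H)$; $S$ is affine if $\mathrm{Aff}(S)=S$; $S^{\otimes N}=\{\rho_1\otimes\dots\otimes\rho_N:\rho_a\in S\}$. A resource-destroying map for $\mathcal F(A)$ is a completely positive trace-preserving linear map $\Delta$ with $\Delta(\rho)\in\mathcal F(A)$ for all $\rho\in\mathcal D(\mathcal H_A)$ and $\Delta(\sigma)=\sigma$ for all $\sigma\in\mathcal F(A)$. *)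

theory Defs
  imports "Jordan_Normal_Form.Matrix" Complex_Main
begin

(* Conventions: a Hilbert space of dimension d is C^d; operators on it are
   complex d x d matrices (JNF type complex mat with carrier_mat d d). *)

definition dag :: "complex mat \<Rightarrow> complex mat" where
  "dag A = mat (dim_col A) (dim_row A) (\<lambda>(i,j). cnj (A $$ (j,i)))"

definition tr :: "complex mat \<Rightarrow> complex" where
  "tr A = (\<Sum>i<dim_row A. A $$ (i,i))"

definition unitary :: "nat \<Rightarrow> complex mat \<Rightarrow> bool" where
  "unitary d U \<longleftrightarrow> U \<in> carrier_mat d d \<and> U * dag U = 1\<^sub>m d \<and> dag U * U = 1\<^sub>m d"

definition psd :: "nat \<Rightarrow> complex mat \<Rightarrow> bool" where
  "psd d A \<longleftrightarrow> A \<in> carrier_mat d d \<and> dag A = A \<and>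
     (\<forall>v \<in> carrier_vec d. 0 \<le> Re (conjugate v \<bullet> (A *\<^sub>v v)))"

definition density_ops :: "nat \<Rightarrow> complex mat set" where
  "density_ops d = {\<rho>. psd d \<rho> \<and> tr \<rho> = 1}"

definition Aff :: "nat \<Rightarrow> complex mat set \<Rightarrow> complex mat set" where
  "Aff d S = {\<rho> \<in> density_ops d. \<exists>A t. finite A \<and> A \<subseteq> S \<and> (\<Sum>\<sigma>\<in>A. t \<sigma>) = (1::real) \<and>
       \<rho> = mat d d (\<lambda>ij. \<Sum>\<sigma>\<in>A. complex_of_real (t \<sigma>) * \<sigma> $$ ij)}"

definition affine_set :: "nat \<Rightarrow> complex mat set \<Rightarrow> bool" where
  "affine_set d S \<longleftrightarrow> Aff d S = S"

definition kron :: "complex mat \<Rightarrow> complex mat \<Rightarrow> complex mat" where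
  "kron A B = mat (dim_row A * dim_row B) (dim_col A * dim_col B)
     (\<lambda>(i,j). A $$ (i div dim_row B, j div dim_col B) * B $$ (i mod dim_row B, j mod dim_col B))"

fun kron_list :: "complex mat list \<Rightarrow> complex mat" where
  "kron_list [] = 1\<^sub>m 1"
| "kron_list (A # As) = kron A (kron_list As)"

definition tensor_pow :: "nat \<Rightarrow> complex mat set \<Rightarrow> complex mat set" where
  "tensor_pow N S = {kron_list \<rho>s | \<rho>s. length \<rho>s = N \<and> set \<rho>s \<subseteq> S}"

definition linear_map :: "nat \<Rightarrow> (complex mat \<Rightarrow> complex mat) \<Rightarrow> bool" where
  "linear_map d \<Phi> \<longleftrightarrow>
     (\<forall>A \<in> carrier_mat d d. \<Phi> A \<in> carrier_mat d d) \<and>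
     (\<forall>A \<in> carrier_mat d d. \<forall>B \<in> carrier_mat d d. \<Phi> (A + B) = \<Phi> A + \<Phi> B) \<and>
     (\<forall>A \<in> carrier_mat d d. \<forall>c. \<Phi> (c \<cdot>\<^sub>m A) = c \<cdot>\<^sub>m \<Phi> A)"

(* id_k \<otimes> \<Phi>, acting on (k*d) x (k*d) matrices viewed as k x k blocks of d x d matrices *)
definition block :: "nat \<Rightarrow> complex mat \<Rightarrow> nat \<Rightarrow> nat \<Rightarrow> complex mat" where
  "block d X a b = mat d d (\<lambda>(p,q). X $$ (a*d + p, b*d + q))"

definition id_tensor :: "nat \<Rightarrow> nat \<Rightarrow> (complex mat \<Rightarrow> complex mat) \<Rightarrow> complex mat \<Rightarrow> complex mat" where
  "id_tensor k d \<Phi> X = mat (k*d) (k*d)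
     (\<lambda>(i,j). \<Phi> (block d X (i div d) (j div d)) $$ (i mod d, j mod d))"

definition CPTP :: "nat \<Rightarrow> (complex mat \<Rightarrow> complex mat) \<Rightarrow> bool" where
  "CPTP d \<Phi> \<longleftrightarrow> linear_map d \<Phi> \<and>
     (\<forall>k X. psd (k*d) X \<longrightarrow> psd (k*d) (id_tensor k d \<Phi> X)) \<and>
     (\<forall>A \<in> carrier_mat d d. tr (\<Phi> A) = tr A)"

definition resource_destroying :: "nat \<Rightarrow> complex mat set \<Rightarrow> (complex mat \<Rightarrow> complex mat) \<Rightarrow> bool" where
  "resource_destroying d F \<Delta> \<longleftrightarrow> CPTP d \<Delta> \<and>
     (\<forall>\<rho> \<in> density_ops d. \<Delta> \<rho> \<in> F) \<and> (\<forall>\<sigma> \<in> F. \<Delta> \<sigma> = \<sigma>)"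

definition twirl :: "nat \<Rightarrow> complex mat set \<Rightarrow> complex mat \<Rightarrow> complex mat" where
  "twirl d G \<rho> = mat d d (\<lambda>ij. (1 / of_nat (card G)) * (\<Sum>U\<in>G. (U * \<rho> * dag U) $$ ij))"

definition twirl_tensor :: "nat \<Rightarrow> complex mat set \<Rightarrow> nat \<Rightarrow> complex mat \<Rightarrow> complex mat" where
  "twirl_tensor d G N \<rho> = mat (d^N) (d^N) (\<lambda>ij. (1 / of_nat (card G ^ N)) *
     (\<Sum>Us \<in> {Us. length Us = N \<and> set Us \<subseteq> G}. (kron_list Us * \<rho> * dag (kron_list Us)) $$ ij))"

end

theory Submission
  imports Defs
begin

text \<open>The twirl \<open>\<Delta>\<close> is an average of unitary conjugations, hence completely positive and
  trace preserving. Left multiplication permutes \<open>G\<close>, so every \<open>\<Delta>(\<rho>)\<close> is invariant under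
  conjugation by \<open>G\<close>; thus \<open>\<Delta>\<close> is idempotent, \<open>\<F>(A)\<close> is its set of fixed states, and by
  linearity it is closed under affine combinations.

  For the last claim, write a \<open>\<Delta>\<^sup>\<otimes>\<^sup>N\<close>-fixed \<open>\<rho>\<close> in matrix units:
  \<open>\<rho> = \<Delta>\<^sup>\<otimes>\<^sup>N(\<rho>)\<close> is a complex combination of products \<open>\<Delta>(E\<^sub>1) \<otimes> \<dots> \<otimes> \<Delta>(E\<^sub>N)\<close>, and by
  polarization each matrix unit is a complex combination of states, so \<open>\<rho>\<close> is a complex
  combination of elements of \<open>\<F>(A)\<^sup>\<otimes>\<^sup>N\<close>. As \<open>\<rho>\<close> and these products are Hermitian, the
  coefficients may be replaced by their real parts, and comparing traces shows they sum to 1.\<close>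

lemma sum_lessThan_mult:
  fixes f :: "nat \<Rightarrow> 'a::comm_monoid_add"
  shows "(\<Sum>i<m*n. f i) = (\<Sum>a<m. \<Sum>p<n. f (a*n+p))"
proof (induction m)
  case 0 then show ?case by simp
next
  case (Suc m)
  have e: "{..<Suc m * n} = {..<m*n} \<union> {m*n..<m*n+n}" by auto
  have "(\<Sum>i\<in>{0+m*n..<n+m*n}. f i) = (\<Sum>p\<in>{0..<n}. f (p+m*n))"
    by (rule sum.shift_bounds_nat_ivl)
  then have "(\<Sum>i\<in>{m*n..<m*n+n}. f i) = (\<Sum>p<n. f (m*n+p))"
    by (simp add: add.commute lessThan_atLeast0)
  moreover have "(\<Sum>i<Suc m * n. f i) = (\<Sum>i<m*n. f i) + (\<Sum>i\<in>{m*n..<m*n+n}. f i)"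
    unfolding e by (rule sum.union_disjoint) auto
  ultimately show ?case using Suc by simp
qed

lemma mult_add_less_mult: "a < k \<Longrightarrow> p < (d::nat) \<Longrightarrow> a*d+p < k*d"
proof -
  assume "a<k" "p<d"
  then have "a*d+p < a*d + d" by simp
  also have "\<dots> = Suc a * d" by simp
  also have "\<dots> \<le> k*d" using \<open>a<k\<close> by (intro mult_le_mono1) simp
  finally show ?thesis .
qed

lemma mult_add_div_mod_eq [simp]:
  "p < (D::nat) \<Longrightarrow> (a * D + p) div D = a" "p < (D::nat) \<Longrightarrow> (a * D + p) mod D = p"
  by simp_all

lemma sum_swap3: "(\<Sum>p\<in>P. \<Sum>q\<in>Q. \<Sum>u\<in>W. f p q u) = (\<Sum>u\<in>W. \<Sum>p\<in>P. \<Sum>q\<in>Q. f p q u)"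
proof -
  have "(\<Sum>p\<in>P. \<Sum>q\<in>Q. \<Sum>u\<in>W. f p q u) = (\<Sum>p\<in>P. \<Sum>u\<in>W. \<Sum>q\<in>Q. f p q u)"
    by (rule sum.cong[OF refl], rule sum.swap)
  also have "\<dots> = (\<Sum>u\<in>W. \<Sum>p\<in>P. \<Sum>q\<in>Q. f p q u)" by (rule sum.swap)
  finally show ?thesis .
qed

lemma sum_swap4: "(\<Sum>a\<in>A. \<Sum>b\<in>B. \<Sum>u\<in>C. \<Sum>v\<in>E. f a b u v) = (\<Sum>u\<in>C. \<Sum>v\<in>E. \<Sum>a\<in>A. \<Sum>b\<in>B. f a b u v)"
proof -
  have "(\<Sum>a\<in>A. \<Sum>b\<in>B. \<Sum>u\<in>C. \<Sum>v\<in>E. f a b u v) = (\<Sum>a\<in>A. \<Sum>u\<in>C. \<Sum>b\<in>B. \<Sum>v\<in>E. f a b u v)"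
    by (rule sum.cong[OF refl], rule sum.swap)
  also have "\<dots> = (\<Sum>u\<in>C. \<Sum>a\<in>A. \<Sum>b\<in>B. \<Sum>v\<in>E. f a b u v)" by (rule sum.swap)
  also have "\<dots> = (\<Sum>u\<in>C. \<Sum>v\<in>E. \<Sum>a\<in>A. \<Sum>b\<in>B. f a b u v)"
    by (rule sum.cong[OF refl], rule sum_swap3)
  finally show ?thesis .
qed

lemma sum_delta_mult: "finite S \<Longrightarrow> (\<Sum>q\<in>S. f q * (if q = p then 1 else (0::'a::semiring_1))) = (if p \<in> S then f p else 0)"
  by (simp add: if_distrib[of "\<lambda>x. f _ * x"] sum.delta cong: if_cong)

lemma sum_two_deltas: assumes "a \<noteq> b" "a < d" "b < (d::nat)"
  shows "(\<Sum>p<d. (if p = a then x else if p = b then y else 0)) = x + (y::'a::comm_monoid_add)"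
proof -
  have "(\<Sum>p<d. (if p = a then x else if p = b then y else 0)) = (\<Sum>p<d. (if p = a then x else 0) + (if p = b then y else 0))"
    using assms(1) by (intro sum.cong) auto
  also have "\<dots> = x + y" using assms by (simp add: sum.distrib)
  finally show ?thesis .
qed

lemma sum_delta_pair: assumes "a < d" "b < (d::nat)"
  shows "(\<Sum>p<d. \<Sum>q<d. f p q * (if p = a \<and> q = b then 1 else 0) * g p q) = f a b * (g a b :: 'a::comm_semiring_1)"
proof -
  have e: "\<And>p q. f p q * (if p = a \<and> q = b then 1 else 0) * g p q = (if q = b then (if p = a then f a b * g a b else 0) else 0)"
    by auto
  show ?thesis unfolding e using assms by simp
qed

lemma sum_mult_sum_scaled:
  fixes f g :: "_ \<Rightarrow> 'a::comm_semiring_1"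
  shows "(c1 * sum f A) * (c2 * sum g B) = (c1 * c2) * (\<Sum>x\<in>A. \<Sum>y\<in>B. f x * g y)"
  by (simp add: sum_product mult_ac)

lemma sum_block_diagonal:
  fixes g f :: "nat \<Rightarrow> 'a::semiring_1"
  assumes i: "i < k * d"
  shows "(\<Sum>a<k*d. (if i div d = a div d then g (a mod d) else 0) * f a) = (\<Sum>p<d. g p * f (i div d * d + p))"
proof -
  have dpos: "d > 0" using i by (cases d) auto
  have ik: "i div d < k" using i by (simp add: less_mult_imp_div_less)
  have "(\<Sum>a<k*d. (if i div d = a div d then g (a mod d) else 0) * f a)
     = (\<Sum>a1<k. \<Sum>p<d. (if i div d = (a1*d+p) div d then g ((a1*d+p) mod d) else 0) * f (a1*d+p))"
    by (rule sum_lessThan_mult)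
  also have "\<dots> = (\<Sum>a1<k. if i div d = a1 then (\<Sum>p<d. g p * f (a1*d+p)) else 0)"
    by (intro sum.cong refl) auto
  also have "\<dots> = (\<Sum>p<d. g p * f (i div d * d + p))" using ik by (simp add: sum.delta)
  finally show ?thesis .
qed

lemma index_mult_mat_sum: "A \<in> carrier_mat n m \<Longrightarrow> B \<in> carrier_mat m l \<Longrightarrow> i < n \<Longrightarrow> j < l \<Longrightarrow>
   (A * B) $$ (i,j) = (\<Sum>k<m. A $$ (i,k) * B $$ (k,j))"
  by (auto simp: scalar_prod_def lessThan_atLeast0 intro!: sum.cong)

lemma dag_dims[simp]: "dim_row (dag A) = dim_col A" "dim_col (dag A) = dim_row A"
  by (auto simp: dag_def)

lemma dag_carrier[simp]: "A \<in> carrier_mat n m \<Longrightarrow> dag A \<in> carrier_mat m n"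
  by (auto simp: dag_def)

lemma dag_entry: "A \<in> carrier_mat n m \<Longrightarrow> i < m \<Longrightarrow> j < n \<Longrightarrow> dag A $$ (i,j) = cnj (A $$ (j,i))"
  by (auto simp: dag_def)

lemma dag_dag: "A \<in> carrier_mat n m \<Longrightarrow> dag (dag A) = A"
  by (auto simp: dag_def intro!: eq_matI)

lemma dag_mult: assumes A: "A \<in> carrier_mat n m" and B: "B \<in> carrier_mat m l"
  shows "dag (A * B) = dag B * dag A"
proof (rule eq_matI)
  fix i j assume i: "i < dim_row (dag B * dag A)" and j: "j < dim_col (dag B * dag A)"
  then have i': "i < l" and j': "j < n" using A B by auto
  have "dag (A * B) $$ (i,j) = cnj ((A*B) $$ (j,i))" using A B i' j' by (auto simp: dag_def)
  also have "\<dots> = cnj (\<Sum>k<m. A $$ (j,k) * B $$ (k,i))" using index_mult_mat_sum[OF A B j' i'] by simp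
  also have "\<dots> = (\<Sum>k<m. dag B $$ (i,k) * dag A $$ (k,j))"
    using A B i' j' by (simp add: dag_entry mult.commute)
  also have "\<dots> = (dag B * dag A) $$ (i,j)" using index_mult_mat_sum[OF dag_carrier[OF B] dag_carrier[OF A] i' j'] by simp
  finally show "dag (A * B) $$ (i,j) = (dag B * dag A) $$ (i,j)" .
next show "dim_row (dag (A * B)) = dim_row (dag B * dag A)" using A B by simp
next show "dim_col (dag (A * B)) = dim_col (dag B * dag A)" using A B by simp
qed

lemma sandwich_mult:
  assumes V: "V \<in> carrier_mat n n" and U: "U \<in> carrier_mat n n" and A: "A \<in> carrier_mat n n"
  shows "(V * U) * A * dag (V * U) = V * (U * A * dag U) * dag V"
proof -
  have e1: "(V * U) * A = V * (U * A)" using U V A by (intro assoc_mult_mat) auto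
  have e2: "V * (U * A) * (dag U * dag V) = (V * (U * A) * dag U) * dag V"
    using U V A by (intro assoc_mult_mat[symmetric]) auto
  have e3: "V * (U * A) * dag U = V * (U * A * dag U)"
    using U V A by (intro assoc_mult_mat) auto
  show ?thesis unfolding dag_mult[OF V U] e1 e2 e3 ..
qed

lemma hermitian_cnj_entry:
  "dag A = A \<Longrightarrow> A \<in> carrier_mat n n \<Longrightarrow> i < n \<Longrightarrow> j < n \<Longrightarrow> cnj (A $$ (j,i)) = A $$ (i,j)"
  using dag_entry[of A n n i j] by simp

lemma index_sandwich:
  assumes U: "U \<in> carrier_mat n n" and B: "B \<in> carrier_mat n n" and r: "r < n" and s: "s < n"
  shows "(U * B * dag U) $$ (r,s) = (\<Sum>p<n. \<Sum>q<n. U $$ (r,p) * B $$ (p,q) * cnj (U $$ (s,q)))"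
proof -
  have UB: "U * B \<in> carrier_mat n n" using U B by auto
  have "(U * B * dag U) $$ (r,s) = (\<Sum>q<n. (U*B) $$ (r,q) * dag U $$ (q,s))"
    using index_mult_mat_sum[OF UB dag_carrier[OF U] r s] .
  also have "\<dots> = (\<Sum>q<n. (\<Sum>p<n. U $$ (r,p) * B $$ (p,q)) * cnj (U $$ (s,q)))"
    using index_mult_mat_sum[OF U B r] dag_entry[OF U _ s] by (intro sum.cong) auto
  also have "\<dots> = (\<Sum>p<n. \<Sum>q<n. U $$ (r,p) * B $$ (p,q) * cnj (U $$ (s,q)))"
    by (subst sum.swap) (simp add: sum_distrib_right)
  finally show ?thesis .
qed

lemma quadratic_form_sum: assumes M: "M \<in> carrier_mat n n" and v: "v \<in> carrier_vec n"
  shows "conjugate v \<bullet> (M *\<^sub>v v) = (\<Sum>i<n. \<Sum>j<n. cnj (v$i) * M$$(i,j) * v$j)"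
  using M v by (auto simp: scalar_prod_def mult_mat_vec_def lessThan_atLeast0 sum_distrib_left ac_simps
      intro!: sum.cong)

lemma scalar_prod_adjoint: assumes W: "W \<in> carrier_mat n m" and v: "v \<in> carrier_vec n" and y: "y \<in> carrier_vec m"
  shows "conjugate v \<bullet> (W *\<^sub>v y) = conjugate (dag W *\<^sub>v v) \<bullet> y"
proof -
  have "conjugate v \<bullet> (W *\<^sub>v y) = (\<Sum>i<n. cnj (v$i) * (\<Sum>a<m. W $$ (i,a) * y$a))"
    using W v y by (auto simp: scalar_prod_def mult_mat_vec_def lessThan_atLeast0 intro!: sum.cong)
  also have "\<dots> = (\<Sum>a<m. \<Sum>i<n. cnj (v$i) * W $$ (i,a) * y$a)"
    by (subst sum.swap) (simp add: sum_distrib_left ac_simps)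
  also have "\<dots> = (\<Sum>a<m. cnj (\<Sum>i<n. dag W $$ (a,i) * v$i) * y$a)"
    using W by (auto simp: dag_entry sum_distrib_left sum_distrib_right ac_simps intro!: sum.cong)
  also have "\<dots> = conjugate (dag W *\<^sub>v v) \<bullet> y"
    using W v y by (auto simp: scalar_prod_def mult_mat_vec_def lessThan_atLeast0 intro!: sum.cong)
  finally show ?thesis .
qed

lemma psd_sandwich: assumes X: "psd m X" and W: "W \<in> carrier_mat n m"
  shows "psd n (W * X * dag W)"
proof -
  have Xc: "X \<in> carrier_mat m m" and Xh: "dag X = X" and Xp: "\<forall>v\<in>carrier_vec m. 0 \<le> Re (conjugate v \<bullet> (X *\<^sub>v v))"
    using X by (auto simp: psd_def)
  have dW: "dag W \<in> carrier_mat m n" using W by simp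
  have c: "W * X * dag W \<in> carrier_mat n n" using W Xc by auto
  have "dag (W * X * dag W) = dag (dag W) * dag (W * X)"
    using dag_mult[of "W * X" n m "dag W" n] W Xc by auto
  also have "\<dots> = W * (X * dag W)" using dag_dag[OF W] dag_mult[OF W Xc] Xh by simp
  also have "\<dots> = W * X * dag W" using W Xc by (intro assoc_mult_mat[symmetric]) auto
  finally have h: "dag (W * X * dag W) = W * X * dag W" .
  have p: "0 \<le> Re (conjugate v \<bullet> ((W * X * dag W) *\<^sub>v v))" if v: "v \<in> carrier_vec n" for v
  proof -
    have dWv: "dag W *\<^sub>v v \<in> carrier_vec m" using dW v by (rule mult_mat_vec_carrier)
    have "(W * X * dag W) *\<^sub>v v = (W * X) *\<^sub>v (dag W *\<^sub>v v)"
      using W Xc v dW by (intro assoc_mult_mat_vec) auto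
    also have "\<dots> = W *\<^sub>v (X *\<^sub>v (dag W *\<^sub>v v))"
      using W Xc dWv by (intro assoc_mult_mat_vec) auto
    finally have "conjugate v \<bullet> ((W * X * dag W) *\<^sub>v v) = conjugate (dag W *\<^sub>v v) \<bullet> (X *\<^sub>v (dag W *\<^sub>v v))"
      using scalar_prod_adjoint[OF W v, of "X *\<^sub>v (dag W *\<^sub>v v)"] W Xc v dWv by auto
    then show ?thesis using Xp dWv by auto
  qed
  show ?thesis using c h p by (simp add: psd_def)
qed

lemma psd_scaled_sum:
  assumes Zp: "\<And>x. x \<in> A \<Longrightarrow> psd n (Z x)" and Yc: "Y \<in> carrier_mat n n"
    and Ye: "\<And>i j. i < n \<Longrightarrow> j < n \<Longrightarrow> Y $$ (i,j) = 1 / of_nat m * (\<Sum>x\<in>A. Z x $$ (i,j))"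
  shows "psd n Y"
proof -
  have Zc: "\<And>x. x \<in> A \<Longrightarrow> Z x \<in> carrier_mat n n" using Zp by (simp add: psd_def)
  have h: "dag Y = Y"
  proof (rule eq_matI)
    fix i j assume "i < dim_row Y" "j < dim_col Y"
    then have i: "i < n" and j: "j < n" using Yc by auto
    have "dag Y $$ (i,j) = 1 / of_nat m * (\<Sum>x\<in>A. cnj (Z x $$ (j,i)))"
      using dag_entry[OF Yc i j] Ye[OF j i] by simp
    also have "\<dots> = Y $$ (i,j)"
      using hermitian_cnj_entry[OF _ Zc i j] Zp Ye[OF i j] by (simp add: psd_def)
    finally show "dag Y $$ (i,j) = Y $$ (i,j)" .
  qed (use Yc in auto)
  have p: "0 \<le> Re (conjugate v \<bullet> (Y *\<^sub>v v))" if v: "v \<in> carrier_vec n" for v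
  proof -
    have "conjugate v \<bullet> (Y *\<^sub>v v) = (\<Sum>i<n. \<Sum>j<n. \<Sum>x\<in>A. 1 / of_nat m * (cnj (v$i) * Z x $$ (i,j) * v$j))"
      using quadratic_form_sum[OF Yc v] Ye
      by (auto simp: sum_distrib_left sum_distrib_right ac_simps intro!: sum.cong)
    also have "\<dots> = (\<Sum>x\<in>A. conjugate v \<bullet> (Z x *\<^sub>v v)) / of_nat m"
      using quadratic_form_sum[OF Zc v] by (subst sum_swap3) (simp add: sum_divide_distrib)
    finally have e: "conjugate v \<bullet> (Y *\<^sub>v v) = (\<Sum>x\<in>A. conjugate v \<bullet> (Z x *\<^sub>v v)) / of_nat m" .
    have "0 \<le> (\<Sum>x\<in>A. Re (conjugate v \<bullet> (Z x *\<^sub>v v)))"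
      using Zp v by (intro sum_nonneg) (simp add: psd_def)
    then show ?thesis unfolding e by (simp add: Re_sum)
  qed
  show ?thesis using Yc h p by (simp add: psd_def)
qed

definition id_kron :: "nat \<Rightarrow> nat \<Rightarrow> complex mat \<Rightarrow> complex mat" where
  "id_kron k d U = mat (k*d) (k*d) (\<lambda>(i,a). if i div d = a div d then U $$ (i mod d, a mod d) else 0)"

lemma id_kron_carrier[simp]: "id_kron k d U \<in> carrier_mat (k*d) (k*d)"
  by (simp add: id_kron_def)

lemma id_kron_sandwich_entry:
  assumes U: "U \<in> carrier_mat d d" and X: "X \<in> carrier_mat (k*d) (k*d)" and i: "i < k*d" and j: "j < k*d"
  shows "(id_kron k d U * X * dag (id_kron k d U)) $$ (i,j) =
    (U * block d X (i div d) (j div d) * dag U) $$ (i mod d, j mod d)"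
proof -
  have "d > 0" using i by (cases d) auto
  then have im: "i mod d < d" and jm: "j mod d < d" by auto
  have B: "block d X (i div d) (j div d) \<in> carrier_mat d d" by (simp add: block_def)
  have "(id_kron k d U * X * dag (id_kron k d U)) $$ (i,j) =
      (\<Sum>a<k*d. \<Sum>b<k*d. id_kron k d U $$ (i,a) * X $$ (a,b) * cnj (id_kron k d U $$ (j,b)))"
    using index_sandwich[OF id_kron_carrier X i j] .
  also have "\<dots> = (\<Sum>a<k*d. (if i div d = a div d then U $$ (i mod d, a mod d) else 0) *
        (\<Sum>b<k*d. (if j div d = b div d then cnj (U $$ (j mod d, b mod d)) else 0) * X $$ (a,b)))"
    using i j by (auto simp: id_kron_def sum_distrib_left ac_simps intro!: sum.cong)
  also have "\<dots> = (\<Sum>a<k*d. (if i div d = a div d then U $$ (i mod d, a mod d) else 0) *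
        (\<Sum>q<d. cnj (U $$ (j mod d, q)) * X $$ (a, j div d * d + q)))"
    using sum_block_diagonal[OF j, of "\<lambda>b. cnj (U $$ (j mod d, b))"] by simp
  also have "\<dots> = (\<Sum>p<d. U $$ (i mod d, p) *
        (\<Sum>q<d. cnj (U $$ (j mod d, q)) * X $$ (i div d * d + p, j div d * d + q)))"
    using sum_block_diagonal[OF i, of "\<lambda>a. U $$ (i mod d, a)"
        "\<lambda>a. (\<Sum>q<d. cnj (U $$ (j mod d, q)) * X $$ (a, j div d * d + q))"] by simp
  also have "\<dots> = (U * block d X (i div d) (j div d) * dag U) $$ (i mod d, j mod d)"
    using index_sandwich[OF U B im jm] by (simp add: block_def sum_distrib_left ac_simps)
  finally show ?thesis .
qed

lemma kron_dims[simp]: "dim_row (kron A B) = dim_row A * dim_row B" "dim_col (kron A B) = dim_col A * dim_col B"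
  by (simp_all add: kron_def)

lemma kron_entry: "i < dim_row A * dim_row B \<Longrightarrow> j < dim_col A * dim_col B \<Longrightarrow>
   kron A B $$ (i,j) = A $$ (i div dim_row B, j div dim_col B) * B $$ (i mod dim_row B, j mod dim_col B)"
  by (simp add: kron_def)

lemma kron_list_carrier: "set As \<subseteq> carrier_mat n n \<Longrightarrow> kron_list As \<in> carrier_mat (n ^ length As) (n ^ length As)"
proof (induction As)
  case Nil then show ?case by simp
next
  case (Cons A As)
  then have "A \<in> carrier_mat n n" "kron_list As \<in> carrier_mat (n ^ length As) (n ^ length As)" by auto
  then show ?case unfolding carrier_mat_def by simp
qed

lemma dag_kron: "dag (kron A B) = kron (dag A) (dag B)"
proof (rule eq_matI)
  fix i j assume "i < dim_row (kron (dag A) (dag B))" "j < dim_col (kron (dag A) (dag B))"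
  then have i: "i < dim_col A * dim_col B" and j: "j < dim_row A * dim_row B" by simp_all
  moreover have "dim_col B > 0" "dim_row B > 0" using i j by (auto intro!: gr0I)
  ultimately have "i div dim_col B < dim_col A" "j div dim_row B < dim_row A"
    "i mod dim_col B < dim_col B" "j mod dim_row B < dim_row B"
    by (auto simp: less_mult_imp_div_less mult.commute[of "dim_col A"] mult.commute[of "dim_row A"])
  then show "dag (kron A B) $$ (i,j) = kron (dag A) (dag B) $$ (i,j)"
    using i j by (simp add: dag_def kron_def)
qed simp_all

lemma trace_kron:
  assumes A: "A \<in> carrier_mat n n" and B: "B \<in> carrier_mat m m"
  shows "tr (kron A B) = tr A * tr B"
proof -
  have "tr (kron A B) = (\<Sum>i<n * m. kron A B $$ (i,i))" using A B by (simp add: tr_def)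
  also have "\<dots> = (\<Sum>a<n. \<Sum>p<m. kron A B $$ (a * m + p, a * m + p))" by (rule sum_lessThan_mult)
  also have "\<dots> = (\<Sum>a<n. \<Sum>p<m. A $$ (a,a) * B $$ (p,p))"
  proof (intro sum.cong refl)
    fix a p assume "a \<in> {..<n}" and p: "p \<in> {..<m}"
    then have "a * m + p < n * m" using mult_add_less_mult by auto
    then show "kron A B $$ (a * m + p, a * m + p) = A $$ (a,a) * B $$ (p,p)"
      using kron_entry[of "a * m + p" A B "a * m + p"] A B p by simp
  qed
  also have "\<dots> = tr A * tr B" using A B by (simp add: tr_def sum_product)
  finally show ?thesis .
qed

lemma kron_list_hermitian_trace:
  "set As \<subseteq> {\<sigma> \<in> carrier_mat n n. dag \<sigma> = \<sigma> \<and> tr \<sigma> = 1} \<Longrightarrow> dag (kron_list As) = kron_list As \<and> tr (kron_list As) = 1"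
proof (induction As)
  case Nil
  have "dag (1\<^sub>m 1 :: complex mat) = 1\<^sub>m 1" by (auto simp: dag_def intro!: eq_matI)
  then show ?case by (simp add: tr_def)
next
  case (Cons A As)
  have "kron_list As \<in> carrier_mat (n ^ length As) (n ^ length As)"
    using Cons.prems by (intro kron_list_carrier) auto
  then show ?case using Cons by (auto simp: dag_kron trace_kron)
qed

lemma tensor_pow_carrier:
  assumes "S \<subseteq> carrier_mat n n" and "\<tau> \<in> tensor_pow N S"
  shows "\<tau> \<in> carrier_mat (n^N) (n^N)"
  using assms kron_list_carrier[of _ n] by (auto simp: tensor_pow_def)

lemma tensor_pow_hermitian_trace:
  assumes "S \<subseteq> {\<sigma> \<in> carrier_mat n n. dag \<sigma> = \<sigma> \<and> tr \<sigma> = 1}"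
  shows "tensor_pow N S \<subseteq> {\<sigma> \<in> carrier_mat (n^N) (n^N). dag \<sigma> = \<sigma> \<and> tr \<sigma> = 1}"
proof
  fix \<tau> assume \<tau>: "\<tau> \<in> tensor_pow N S"
  then obtain \<rho>s where e: "\<tau> = kron_list \<rho>s" "length \<rho>s = N" "set \<rho>s \<subseteq> S"
    by (auto simp: tensor_pow_def)
  have "dag (kron_list \<rho>s) = kron_list \<rho>s \<and> tr (kron_list \<rho>s) = 1"
    using e(3) assms by (intro kron_list_hermitian_trace) blast
  moreover have "\<tau> \<in> carrier_mat (n^N) (n^N)" using assms \<tau> by (intro tensor_pow_carrier) auto
  ultimately show "\<tau> \<in> {\<sigma> \<in> carrier_mat (n^N) (n^N). dag \<sigma> = \<sigma> \<and> tr \<sigma> = 1}" using e(1) by simp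
qed

lemma tensor_pow_0: "1\<^sub>m 1 \<in> tensor_pow 0 S"
  by (auto simp: tensor_pow_def)

lemma kron_mem_tensor_pow_Suc:
  assumes "\<sigma> \<in> S" and "\<tau> \<in> tensor_pow N S"
  shows "kron \<sigma> \<tau> \<in> tensor_pow (Suc N) S"
proof -
  obtain \<rho>s where "\<tau> = kron_list \<rho>s" "length \<rho>s = N" "set \<rho>s \<subseteq> S"
    using assms(2) by (auto simp: tensor_pow_def)
  then show ?thesis using assms(1) unfolding tensor_pow_def
    by (intro CollectI exI[of _ "\<sigma> # \<rho>s"]) simp
qed

lemma kron_sandwich_entry_sum:
  assumes U: "U \<in> carrier_mat d d" and K: "K \<in> carrier_mat D D" and i: "i < d * D" and j: "j < d * D"
  shows "(\<Sum>a<d * D. \<Sum>b<d * D. kron U K $$ (i,a) * X $$ (a,b) * cnj (kron U K $$ (j,b))) =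
    (\<Sum>a1<d. \<Sum>b1<d. \<Sum>a2<D. \<Sum>b2<D.
       (U $$ (i div D, a1) * cnj (U $$ (j div D, b1))) *
       (K $$ (i mod D, a2) * X $$ (a1 * D + a2, b1 * D + b2) * cnj (K $$ (j mod D, b2))))"
proof -
  let ?g = "\<lambda>a b. kron U K $$ (i,a) * X $$ (a,b) * cnj (kron U K $$ (j,b))"
  have dims: "dim_row U = d" "dim_col U = d" "dim_row K = D" "dim_col K = D" using U K by auto
  have "(\<Sum>a<d * D. \<Sum>b<d * D. ?g a b) = (\<Sum>a1<d. \<Sum>a2<D. \<Sum>b<d * D. ?g (a1 * D + a2) b)"
    by (rule sum_lessThan_mult)
  also have "\<dots> = (\<Sum>a1<d. \<Sum>a2<D. \<Sum>b1<d. \<Sum>b2<D. ?g (a1 * D + a2) (b1 * D + b2))"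
    by (rule sum.cong[OF refl], rule sum.cong[OF refl], rule sum_lessThan_mult)
  also have "\<dots> = (\<Sum>a1<d. \<Sum>b1<d. \<Sum>a2<D. \<Sum>b2<D. ?g (a1 * D + a2) (b1 * D + b2))"
    by (rule sum.cong[OF refl], rule sum.swap)
  also have "\<dots> = (\<Sum>a1<d. \<Sum>b1<d. \<Sum>a2<D. \<Sum>b2<D.
       (U $$ (i div D, a1) * cnj (U $$ (j div D, b1))) *
       (K $$ (i mod D, a2) * X $$ (a1 * D + a2, b1 * D + b2) * cnj (K $$ (j mod D, b2))))"
  proof (intro sum.cong refl)
    fix a1 b1 a2 b2 assume a1: "a1 \<in> {..<d}" and b1: "b1 \<in> {..<d}" and a2: "a2 \<in> {..<D}" and b2: "b2 \<in> {..<D}"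
    have ia: "a1 * D + a2 < d * D" and ib: "b1 * D + b2 < d * D" using a1 a2 b1 b2 mult_add_less_mult by auto
    have e1: "kron U K $$ (i, a1 * D + a2) = U $$ (i div D, a1) * K $$ (i mod D, a2)"
      using kron_entry[of i U K "a1 * D + a2"] i ia a2 dims by simp
    have e2: "kron U K $$ (j, b1 * D + b2) = U $$ (j div D, b1) * K $$ (j mod D, b2)"
      using kron_entry[of j U K "b1 * D + b2"] j ib b2 dims by simp
    show "?g (a1 * D + a2) (b1 * D + b2) = (U $$ (i div D, a1) * cnj (U $$ (j div D, b1))) *
       (K $$ (i mod D, a2) * X $$ (a1 * D + a2, b1 * D + b2) * cnj (K $$ (j mod D, b2)))"
      unfolding e1 e2 by (simp add: ac_simps)
  qed
  finally show ?thesis .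
qed

definition lin_comb :: "nat \<Rightarrow> complex mat set \<Rightarrow> (nat \<Rightarrow> nat \<Rightarrow> complex) \<Rightarrow> bool" where
  "lin_comb n S f \<longleftrightarrow> (\<exists>ps. set (map snd ps) \<subseteq> S \<and> (\<forall>i<n. \<forall>j<n. f i j = (\<Sum>p\<leftarrow>ps. fst p * snd p $$ (i,j))))"

lemma lin_comb_zero: "lin_comb n S (\<lambda>i j. 0)"
  unfolding lin_comb_def by (rule exI[of _ "[]"]) simp

lemma lin_comb_add: "lin_comb n S f \<Longrightarrow> lin_comb n S g \<Longrightarrow> lin_comb n S (\<lambda>i j. f i j + g i j)"
  unfolding lin_comb_def
proof (elim exE conjE)
  fix ps qs assume "set (map snd ps) \<subseteq> S" "\<forall>i<n. \<forall>j<n. f i j = (\<Sum>p\<leftarrow>ps. fst p * snd p $$ (i,j))"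
    "set (map snd qs) \<subseteq> S" "\<forall>i<n. \<forall>j<n. g i j = (\<Sum>p\<leftarrow>qs. fst p * snd p $$ (i,j))"
  then show "\<exists>ps. set (map snd ps) \<subseteq> S \<and> (\<forall>i<n. \<forall>j<n. f i j + g i j = (\<Sum>p\<leftarrow>ps. fst p * snd p $$ (i,j)))"
    by (intro exI[of _ "ps @ qs"]) auto
qed

lemma lin_comb_sum: "finite A \<Longrightarrow> (\<And>x. x \<in> A \<Longrightarrow> lin_comb n S (f x)) \<Longrightarrow> lin_comb n S (\<lambda>i j. \<Sum>x\<in>A. f x i j)"
proof (induction A rule: finite_induct)
  case empty then show ?case using lin_comb_zero by simp
next
  case (insert x A)
  then show ?case using lin_comb_add[of n S "f x" "\<lambda>i j. \<Sum>x\<in>A. f x i j"] by simp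
qed

lemma lin_comb_mono: "lin_comb n S f \<Longrightarrow> S \<subseteq> S' \<Longrightarrow> lin_comb n S' f"
  unfolding lin_comb_def by blast

lemma lin_comb_cong: "lin_comb n S f \<Longrightarrow> (\<And>i j. i < n \<Longrightarrow> j < n \<Longrightarrow> g i j = f i j) \<Longrightarrow> lin_comb n S g"
  unfolding lin_comb_def by auto

lemma sum_list_prod: "(\<Sum>p\<leftarrow>concat (map (\<lambda>p1. map (\<lambda>p2. h p1 p2) ys) xs). f p) =
   (\<Sum>p1\<leftarrow>xs. \<Sum>p2\<leftarrow>ys. f (h p1 p2))"
  by (induction xs) (auto simp: o_def)

lemma lin_comb_kron:
  assumes S1: "\<And>\<sigma>. \<sigma> \<in> S1 \<Longrightarrow> \<sigma> \<in> carrier_mat d d" and S2: "\<And>\<tau>. \<tau> \<in> S2 \<Longrightarrow> \<tau> \<in> carrier_mat D D"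
    and f: "lin_comb d S1 f" and g: "lin_comb D S2 g"
  shows "lin_comb (d*D) {kron \<sigma> \<tau> | \<sigma> \<tau>. \<sigma> \<in> S1 \<and> \<tau> \<in> S2} (\<lambda>i j. f (i div D) (j div D) * g (i mod D) (j mod D))"
proof -
  obtain ps where ps: "set (map snd ps) \<subseteq> S1" "\<forall>i<d. \<forall>j<d. f i j = (\<Sum>p\<leftarrow>ps. fst p * snd p $$ (i,j))"
    using f unfolding lin_comb_def by blast
  obtain qs where qs: "set (map snd qs) \<subseteq> S2" "\<forall>i<D. \<forall>j<D. g i j = (\<Sum>p\<leftarrow>qs. fst p * snd p $$ (i,j))"
    using g unfolding lin_comb_def by blast
  let ?h = "\<lambda>p1 p2. (fst p1 * fst p2, kron (snd p1) (snd p2))"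
  let ?rs = "concat (map (\<lambda>p1. map (\<lambda>p2. ?h p1 p2) qs) ps)"
  have "set (map snd ?rs) \<subseteq> {kron \<sigma> \<tau> | \<sigma> \<tau>. \<sigma> \<in> S1 \<and> \<tau> \<in> S2}"
  proof
    fix y assume "y \<in> set (map snd ?rs)"
    then obtain p1 p2 where "p1 \<in> set ps" "p2 \<in> set qs" "y = kron (snd p1) (snd p2)" by auto
    moreover then have "snd p1 \<in> S1" "snd p2 \<in> S2" using ps(1) qs(1) by auto
    ultimately show "y \<in> {kron \<sigma> \<tau> | \<sigma> \<tau>. \<sigma> \<in> S1 \<and> \<tau> \<in> S2}" by blast
  qed
  moreover have "f (i div D) (j div D) * g (i mod D) (j mod D) = (\<Sum>p\<leftarrow>?rs. fst p * snd p $$ (i,j))"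
    if i: "i < d*D" and j: "j < d*D" for i j
  proof -
    have Dpos: "D > 0" using i by (cases D) auto
    have iD: "i div D < d" "i mod D < D" and jD: "j div D < d" "j mod D < D"
      using i j Dpos by (auto simp: less_mult_imp_div_less mult.commute[of d])
    have "(\<Sum>p\<leftarrow>?rs. fst p * snd p $$ (i,j)) = (\<Sum>p1\<leftarrow>ps. \<Sum>p2\<leftarrow>qs. fst p1 * fst p2 * kron (snd p1) (snd p2) $$ (i,j))"
      by (simp add: sum_list_prod)
    also have "\<dots> = (\<Sum>p1\<leftarrow>ps. \<Sum>p2\<leftarrow>qs. (fst p1 * snd p1 $$ (i div D, j div D)) * (fst p2 * snd p2 $$ (i mod D, j mod D)))"
    proof (intro arg_cong[where f = sum_list] map_cong refl)
      fix p1 p2 assume "p1 \<in> set ps" "p2 \<in> set qs"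
      then have "snd p1 \<in> carrier_mat d d" and "snd p2 \<in> carrier_mat D D"
        using ps(1) qs(1) S1 S2 by auto
      then show "fst p1 * fst p2 * kron (snd p1) (snd p2) $$ (i,j) =
         (fst p1 * snd p1 $$ (i div D, j div D)) * (fst p2 * snd p2 $$ (i mod D, j mod D))"
        using kron_entry[of i "snd p1" "snd p2" j] i j by (simp add: ac_simps)
    qed
    also have "\<dots> = f (i div D) (j div D) * g (i mod D) (j mod D)"
      using ps(2) qs(2) iD jD by (simp add: sum_list_mult_const sum_list_const_mult)
    finally show ?thesis by simp
  qed
  ultimately show ?thesis unfolding lin_comb_def by blast
qed

lemma cnj_sum_list: "cnj (\<Sum>x\<leftarrow>xs. f x) = (\<Sum>x\<leftarrow>xs. cnj (f x))"
  by (induction xs) auto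

lemma of_real_sum_list: "complex_of_real (\<Sum>x\<leftarrow>xs. f x) = (\<Sum>x\<leftarrow>xs. complex_of_real (f x))"
  by (induction xs) auto

lemma sum_sum_list_swap: "(\<Sum>i\<in>I. \<Sum>x\<leftarrow>xs. f i x) = (\<Sum>x\<leftarrow>xs. \<Sum>i\<in>I. f i x)"
  by (induction xs) (auto simp: sum.distrib)

lemma sum_list_regroup_real:
  assumes "finite A" "set (map snd xs) \<subseteq> A"
  shows "(\<Sum>\<sigma>\<in>A. \<Sum>p\<leftarrow>xs. if snd p = \<sigma> then r p else (0::real)) = (\<Sum>p\<leftarrow>xs. r p)"
  using assms(2)
proof (induction xs)
  case Nil then show ?case by simp
next
  case (Cons x xs)
  then show ?case using assms(1) by (simp add: sum.distrib sum.delta)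
qed

lemma sum_list_regroup_entry:
  assumes "finite A" "set (map snd xs) \<subseteq> A"
  shows "(\<Sum>\<sigma>\<in>A. complex_of_real (\<Sum>p\<leftarrow>xs. if snd p = \<sigma> then r p else 0) * \<sigma> $$ ij) =
         (\<Sum>p\<leftarrow>xs. complex_of_real (r p) * snd p $$ ij)"
  using assms(2)
proof (induction xs)
  case Nil then show ?case by simp
next
  case (Cons x xs)
  have "(\<Sum>\<sigma>\<in>A. complex_of_real (\<Sum>p\<leftarrow>x # xs. if snd p = \<sigma> then r p else 0) * \<sigma> $$ ij) =
     (\<Sum>\<sigma>\<in>A. (if snd x = \<sigma> then complex_of_real (r x) * \<sigma> $$ ij else 0)) +
     (\<Sum>\<sigma>\<in>A. complex_of_real (\<Sum>p\<leftarrow>xs. if snd p = \<sigma> then r p else 0) * \<sigma> $$ ij)"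
    by (auto simp: sum.distrib[symmetric] distrib_right intro!: sum.cong)
  also have "\<dots> = complex_of_real (r x) * snd x $$ ij + (\<Sum>p\<leftarrow>xs. complex_of_real (r p) * snd p $$ ij)"
    using Cons assms(1) by (simp add: sum.delta)
  finally show ?case by simp
qed

lemma sum_list_in_Aff:
  assumes \<rho>: "\<rho> \<in> density_ops n" and T: "set (map snd ps) \<subseteq> T" and r: "(\<Sum>p\<leftarrow>ps. r p) = 1"
    and e: "\<forall>i<n. \<forall>j<n. \<rho> $$ (i,j) = (\<Sum>p\<leftarrow>ps. complex_of_real (r p) * snd p $$ (i,j))"
  shows "\<rho> \<in> Aff n T"
proof -
  define A where "A = set (map snd ps)"
  define t where "t = (\<lambda>\<sigma>. \<Sum>p\<leftarrow>ps. if snd p = \<sigma> then r p else 0)"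
  have A: "finite A" "A \<subseteq> T" using T by (auto simp: A_def)
  have "(\<Sum>\<sigma>\<in>A. t \<sigma>) = 1" unfolding t_def using sum_list_regroup_real[OF A(1), of ps] r by (simp add: A_def)
  moreover have "\<rho> = mat n n (\<lambda>ij. \<Sum>\<sigma>\<in>A. complex_of_real (t \<sigma>) * \<sigma> $$ ij)"
  proof (rule eq_matI)
    fix i j assume "i < dim_row (mat n n (\<lambda>ij. \<Sum>\<sigma>\<in>A. complex_of_real (t \<sigma>) * \<sigma> $$ ij))"
      "j < dim_col (mat n n (\<lambda>ij. \<Sum>\<sigma>\<in>A. complex_of_real (t \<sigma>) * \<sigma> $$ ij))"
    then have i: "i < n" and j: "j < n" by auto
    have "(\<Sum>\<sigma>\<in>A. complex_of_real (t \<sigma>) * \<sigma> $$ (i,j)) = (\<Sum>p\<leftarrow>ps. complex_of_real (r p) * snd p $$ (i,j))"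
      unfolding t_def using sum_list_regroup_entry[OF A(1), of ps] by (simp add: A_def)
    then show "\<rho> $$ (i,j) = mat n n (\<lambda>ij. \<Sum>\<sigma>\<in>A. complex_of_real (t \<sigma>) * \<sigma> $$ ij) $$ (i,j)"
      using e i j by simp
  qed (use \<rho> in \<open>auto simp: density_ops_def psd_def\<close>)
  ultimately show ?thesis using \<rho> A unfolding Aff_def by blast
qed

lemma subset_Aff:
  assumes "S \<subseteq> density_ops n"
  shows "S \<subseteq> Aff n S"
proof
  fix \<sigma> assume \<sigma>: "\<sigma> \<in> S"
  then have "\<sigma> \<in> density_ops n" using assms by blast
  moreover have "\<sigma> = mat n n (\<lambda>ij. \<Sum>x\<in>{\<sigma>}. complex_of_real 1 * x $$ ij)"
    using \<open>\<sigma> \<in> density_ops n\<close> by (auto simp: density_ops_def psd_def intro!: eq_matI)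
  ultimately show "\<sigma> \<in> Aff n S" using \<sigma> unfolding Aff_def
    by (intro CollectI conjI exI[of _ "{\<sigma>}"] exI[of _ "\<lambda>_. 1::real"]) auto
qed

text \<open>Averaging the expansion of a Hermitian matrix with its adjoint replaces every coefficient
  by its real part.\<close>

lemma hermitian_sum_list_Re:
  assumes \<rho>h: "dag \<rho> = \<rho>" and \<rho>c: "\<rho> \<in> carrier_mat n n"
    and T: "\<forall>\<sigma> \<in> set (map snd ps). \<sigma> \<in> carrier_mat n n \<and> dag \<sigma> = \<sigma>"
    and e: "\<forall>i<n. \<forall>j<n. \<rho> $$ (i,j) = (\<Sum>p\<leftarrow>ps. fst p * snd p $$ (i,j))"
    and i: "i < n" and j: "j < n"
  shows "\<rho> $$ (i,j) = (\<Sum>p\<leftarrow>ps. complex_of_real (Re (fst p)) * snd p $$ (i,j))"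
proof -
  have "\<rho> $$ (i,j) = cnj (\<rho> $$ (j,i))" using hermitian_cnj_entry[OF \<rho>h \<rho>c i j] by simp
  also have "\<dots> = (\<Sum>p\<leftarrow>ps. cnj (fst p * snd p $$ (j,i)))"
    using e i j by (simp add: cnj_sum_list)
  also have "\<dots> = (\<Sum>p\<leftarrow>ps. cnj (fst p) * snd p $$ (i,j))"
  proof (intro arg_cong[where f = sum_list] map_cong refl)
    fix p assume "p \<in> set ps"
    then have "cnj (snd p $$ (j,i)) = snd p $$ (i,j)" using hermitian_cnj_entry[of "snd p" n i j] T i j by simp
    then show "cnj (fst p * snd p $$ (j,i)) = cnj (fst p) * snd p $$ (i,j)" by simp
  qed
  finally have adj: "\<rho> $$ (i,j) = (\<Sum>p\<leftarrow>ps. cnj (fst p) * snd p $$ (i,j))" .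
  have "2 * \<rho> $$ (i,j) = (\<Sum>p\<leftarrow>ps. fst p * snd p $$ (i,j)) + (\<Sum>p\<leftarrow>ps. cnj (fst p) * snd p $$ (i,j))"
    using e i j adj by simp
  also have "\<dots> = 2 * (\<Sum>p\<leftarrow>ps. complex_of_real (Re (fst p)) * snd p $$ (i,j))"
    by (simp add: sum_list_addf[symmetric] distrib_right[symmetric] complex_add_cnj mult.assoc
        sum_list_const_mult)
  finally show ?thesis by simp
qed

lemma hermitian_lin_comb_in_Aff:
  assumes \<rho>: "\<rho> \<in> density_ops n" and T: "T \<subseteq> {\<sigma> \<in> carrier_mat n n. dag \<sigma> = \<sigma> \<and> tr \<sigma> = 1}"
    and c: "lin_comb n T (\<lambda>i j. \<rho> $$ (i,j))"
  shows "\<rho> \<in> Aff n T"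
proof -
  obtain ps where ps: "set (map snd ps) \<subseteq> T" "\<forall>i<n. \<forall>j<n. \<rho> $$ (i,j) = (\<Sum>p\<leftarrow>ps. fst p * snd p $$ (i,j))"
    using c unfolding lin_comb_def by blast
  have \<rho>c: "\<rho> \<in> carrier_mat n n" and \<rho>h: "dag \<rho> = \<rho>" and \<rho>t: "tr \<rho> = 1"
    using \<rho> by (auto simp: density_ops_def psd_def)
  have Tc: "\<And>p. p \<in> set ps \<Longrightarrow> snd p \<in> carrier_mat n n \<and> dag (snd p) = snd p \<and> tr (snd p) = 1"
    using ps(1) T by auto
  have re: "\<forall>i<n. \<forall>j<n. \<rho> $$ (i,j) = (\<Sum>p\<leftarrow>ps. complex_of_real (Re (fst p)) * snd p $$ (i,j))"
    using hermitian_sum_list_Re[OF \<rho>h \<rho>c _ ps(2)] Tc by auto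
  have "(1::complex) = (\<Sum>i<n. \<rho> $$ (i,i))" using \<rho>t \<rho>c by (simp add: tr_def)
  also have "\<dots> = (\<Sum>p\<leftarrow>ps. \<Sum>i<n. complex_of_real (Re (fst p)) * snd p $$ (i,i))"
    using re by (simp add: sum_sum_list_swap)
  also have "\<dots> = (\<Sum>p\<leftarrow>ps. complex_of_real (Re (fst p)))"
    using Tc by (intro arg_cong[where f = sum_list] map_cong refl)
      (auto simp: tr_def sum_distrib_left[symmetric])
  also have "\<dots> = complex_of_real (\<Sum>p\<leftarrow>ps. Re (fst p))" by (simp add: of_real_sum_list)
  finally have "(\<Sum>p\<leftarrow>ps. Re (fst p)) = 1" by (metis of_real_eq_1_iff)
  then show ?thesis using sum_list_in_Aff[OF \<rho> ps(1) _ re] by simp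
qed

definition rank_one :: "nat \<Rightarrow> real \<Rightarrow> (nat \<Rightarrow> complex) \<Rightarrow> complex mat" where
  "rank_one n c w = mat n n (\<lambda>(p,q). complex_of_real c * (w p * cnj (w q)))"

lemma rank_one_psd: assumes c: "c \<ge> 0" shows "psd n (rank_one n c w)"
proof -
  have Rc: "rank_one n c w \<in> carrier_mat n n" by (simp add: rank_one_def)
  have h: "dag (rank_one n c w) = rank_one n c w" by (auto simp: rank_one_def dag_def intro!: eq_matI)
  have p: "0 \<le> Re (conjugate v \<bullet> (rank_one n c w *\<^sub>v v))" if v: "v \<in> carrier_vec n" for v
  proof -
    define z where "z = (\<Sum>i<n. cnj (v$i) * w i)"
    have "conjugate v \<bullet> (rank_one n c w *\<^sub>v v) = (\<Sum>i<n. \<Sum>j<n. cnj (v$i) * rank_one n c w $$ (i,j) * v$j)"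
      using quadratic_form_sum[OF Rc v] .
    also have "\<dots> = (\<Sum>i<n. \<Sum>j<n. complex_of_real c * ((cnj (v$i) * w i) * (cnj (w j) * v$j)))"
      by (intro sum.cong refl) (simp add: rank_one_def ac_simps)
    also have "\<dots> = complex_of_real c * (z * cnj z)"
      by (subst sum.swap) (simp add: z_def sum_product sum_distrib_left cnj_sum ac_simps)
    also have "\<dots> = complex_of_real (c * (cmod z)\<^sup>2)"
      by (simp only: complex_norm_square[symmetric] of_real_mult)
    finally show ?thesis using c by simp
  qed
  show ?thesis using Rc h p by (simp add: psd_def)
qed

lemma rank_one_density:
  assumes "c \<ge> 0" and "(\<Sum>p<n. complex_of_real c * (w p * cnj (w p))) = 1"
  shows "rank_one n c w \<in> density_ops n"
  using rank_one_psd[OF assms(1)] assms(2) by (simp add: density_ops_def tr_def rank_one_def)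

definition matrix_unit :: "nat \<Rightarrow> nat \<Rightarrow> nat \<Rightarrow> complex mat" where
  "matrix_unit n a b = mat n n (\<lambda>(p,q). if p = a \<and> q = b then 1 else 0)"

text \<open>Polarization: for \<open>a \<noteq> b\<close>, with \<open>u = e\<^sub>a + e\<^sub>b\<close> and \<open>w = e\<^sub>a - i e\<^sub>b\<close>,
  \<open>E\<^sub>a\<^sub>b = |u\<rangle>\<langle>u|/2 - i |w\<rangle>\<langle>w|/2 - (1 - i)/2 (E\<^sub>a\<^sub>a + E\<^sub>b\<^sub>b)\<close>, a combination of four pure states.\<close>

lemma matrix_unit_lin_comb_density:
  assumes a: "a < n" and b: "b < n"
  shows "lin_comb n (density_ops n) (\<lambda>i j. matrix_unit n a b $$ (i,j))"
proof -
  let ?e = "\<lambda>a p. if p = a then 1 else (0::complex)"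
  have E: "rank_one n 1 (?e a') \<in> density_ops n" if "a' < n" for a'
  proof (rule rank_one_density)
    have "(\<Sum>p<n. complex_of_real 1 * (?e a' p * cnj (?e a' p))) = (\<Sum>p<n. ?e a' p)"
      by (intro sum.cong refl) auto
    then show "(\<Sum>p<n. complex_of_real 1 * (?e a' p * cnj (?e a' p))) = 1" using that by simp
  qed simp
  show ?thesis
  proof (cases "a = b")
    case True
    show ?thesis unfolding lin_comb_def
      by (rule exI[of _ "[(1, rank_one n 1 (?e a))]"])
        (use E[OF a] True in \<open>auto simp: rank_one_def matrix_unit_def\<close>)
  next
    case False
    let ?u = "\<lambda>p. if p = a then 1 else if p = b then 1 else (0::complex)"
    let ?w = "\<lambda>p. if p = a then 1 else if p = b then - \<i> else (0::complex)"
    have half: "(\<Sum>p<n. if p = a then 1/2 else if p = b then 1/2 else 0) = (1::complex)"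
      using sum_two_deltas[OF False a b, of "1/2::complex" "1/2"] by simp
    have Pu: "rank_one n (1/2) ?u \<in> density_ops n"
      by (rule rank_one_density) (simp, subst half[symmetric], intro sum.cong refl, auto)
    have Pw: "rank_one n (1/2) ?w \<in> density_ops n"
      by (rule rank_one_density) (simp, subst half[symmetric], intro sum.cong refl, use False in auto)
    let ?ps = "[(1, rank_one n (1/2) ?u), (- \<i>, rank_one n (1/2) ?w),
      (- (1 - \<i>)/2, rank_one n 1 (?e a)), (- (1 - \<i>)/2, rank_one n 1 (?e b))]"
    show ?thesis unfolding lin_comb_def
    proof (intro exI[of _ ?ps] conjI allI impI)
      show "set (map snd ?ps) \<subseteq> density_ops n" using Pu Pw E[OF a] E[OF b] by simp
    next
      fix i j assume i: "i < n" and j: "j < n"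
      show "matrix_unit n a b $$ (i,j) = (\<Sum>p\<leftarrow>?ps. fst p * snd p $$ (i,j))"
        using i j False by (auto simp: rank_one_def matrix_unit_def field_simps)
    qed
  qed
qed

locale finite_unitary_group =
  fixes d :: nat and G :: "complex mat set"
  assumes finG: "finite G"
    and unit: "\<forall>U \<in> G. unitary d U"
    and nonempty: "G \<noteq> {}"
    and mult: "\<forall>U \<in> G. \<forall>V \<in> G. U * V \<in> G"
begin

lemma G_carrier_mat: "U \<in> G \<Longrightarrow> U \<in> carrier_mat d d"
  using unit by (auto simp: unitary_def)

lemma card_G_pos: "card G > 0"
  using finG nonempty card_gt_0_iff by blast

lemma unitary_columns_orthonormal: assumes U: "U \<in> G" and p: "p < d" and q: "q < d"
  shows "(\<Sum>i<d. cnj (U $$ (i,q)) * U $$ (i,p)) = (if q = p then 1 else 0)"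
proof -
  have Uc: "U \<in> carrier_mat d d" using G_carrier_mat U .
  have "dag U * U = 1\<^sub>m d" using unit U by (auto simp: unitary_def)
  then have "(dag U * U) $$ (q,p) = (if q = p then 1 else 0)" using p q by simp
  moreover have "(dag U * U) $$ (q,p) = (\<Sum>i<d. dag U $$ (q,i) * U $$ (i,p))"
    using index_mult_mat_sum[OF dag_carrier[OF Uc] Uc q p] .
  moreover have "\<dots> = (\<Sum>i<d. cnj (U $$ (i,q)) * U $$ (i,p))"
    using dag_entry[OF Uc q] by (intro sum.cong) auto
  ultimately show ?thesis by simp
qed

lemma twirl_carrier[simp]: "twirl d G A \<in> carrier_mat d d"
  by (simp add: twirl_def)

lemma twirl_dims[simp]: "dim_row (twirl d G A) = d" "dim_col (twirl d G A) = d"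
  by (simp_all add: twirl_def)

lemma twirl_entry: assumes A: "A \<in> carrier_mat d d" and r: "r < d" and s: "s < d"
  shows "twirl d G A $$ (r,s) = 1 / of_nat (card G) *
     (\<Sum>U\<in>G. \<Sum>p<d. \<Sum>q<d. U $$ (r,p) * A $$ (p,q) * cnj (U $$ (s,q)))"
  using r s index_sandwich[OF G_carrier_mat A r s] by (simp add: twirl_def)

lemma twirl_add: assumes A: "A \<in> carrier_mat d d" and B: "B \<in> carrier_mat d d"
  shows "twirl d G (A + B) = twirl d G A + twirl d G B"
proof (rule eq_matI)
  fix r s assume "r < dim_row (twirl d G A + twirl d G B)" "s < dim_col (twirl d G A + twirl d G B)"
  then have r: "r < d" and s: "s < d" by auto
  have AB: "A + B \<in> carrier_mat d d" using A B by simp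
  show "twirl d G (A + B) $$ (r,s) = (twirl d G A + twirl d G B) $$ (r,s)"
    using r s A B
    by (simp add: twirl_entry[OF AB r s] twirl_entry[OF A r s] twirl_entry[OF B r s]
        sum.distrib distrib_left distrib_right add_divide_distrib)
qed auto

lemma twirl_smult: assumes A: "A \<in> carrier_mat d d"
  shows "twirl d G (c \<cdot>\<^sub>m A) = c \<cdot>\<^sub>m twirl d G A"
proof (rule eq_matI)
  fix r s assume "r < dim_row (c \<cdot>\<^sub>m twirl d G A)" "s < dim_col (c \<cdot>\<^sub>m twirl d G A)"
  then have r: "r < d" and s: "s < d" by auto
  have cA: "c \<cdot>\<^sub>m A \<in> carrier_mat d d" using A by simp
  show "twirl d G (c \<cdot>\<^sub>m A) $$ (r,s) = (c \<cdot>\<^sub>m twirl d G A) $$ (r,s)"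
    using r s A
    by (simp add: twirl_entry[OF cA r s] twirl_entry[OF A r s] sum_distrib_left ac_simps)
qed auto

lemma twirl_trace: assumes A: "A \<in> carrier_mat d d"
  shows "tr (twirl d G A) = tr A"
proof -
  have "tr (twirl d G A) = (\<Sum>i<d. twirl d G A $$ (i,i))" by (simp add: tr_def)
  also have "\<dots> = (\<Sum>i<d. 1 / of_nat (card G) *
     (\<Sum>U\<in>G. \<Sum>p<d. \<Sum>q<d. U $$ (i,p) * A $$ (p,q) * cnj (U $$ (i,q))))"
    using twirl_entry[OF A] by simp
  also have "\<dots> = 1 / of_nat (card G) * (\<Sum>U\<in>G. \<Sum>p<d. \<Sum>q<d. A $$ (p,q) * (\<Sum>i<d. cnj (U $$ (i,q)) * U $$ (i,p)))"
  proof -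
    have "\<And>U. (\<Sum>i<d. \<Sum>p<d. \<Sum>q<d. U $$ (i,p) * A $$ (p,q) * cnj (U $$ (i,q)))
       = (\<Sum>p<d. \<Sum>q<d. \<Sum>i<d. A $$ (p,q) * (cnj (U $$ (i,q)) * U $$ (i,p)))"
      by (subst sum_swap3[symmetric]) (simp add: ac_simps)
    moreover have "(\<Sum>i<d. 1 / of_nat (card G) *
     (\<Sum>U\<in>G. \<Sum>p<d. \<Sum>q<d. U $$ (i,p) * A $$ (p,q) * cnj (U $$ (i,q)))) =
      1 / of_nat (card G) * (\<Sum>U\<in>G. \<Sum>i<d. \<Sum>p<d. \<Sum>q<d. U $$ (i,p) * A $$ (p,q) * cnj (U $$ (i,q)))"
      by (subst sum.swap) (simp add: sum_distrib_left)
    ultimately show ?thesis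
      by (simp add: sum_distrib_left)
  qed
  also have "\<dots> = 1 / of_nat (card G) * (\<Sum>U\<in>G. \<Sum>p<d. A $$ (p,p))"
    by (simp add: unitary_columns_orthonormal sum_delta_mult)
  also have "\<dots> = tr A" using card_G_pos A by (simp add: tr_def)
  finally show ?thesis .
qed

lemma twirl_sum_entry:
  assumes A: "finite A" and f: "\<And>x. x \<in> A \<Longrightarrow> f x \<in> carrier_mat d d"
    and M: "M \<in> carrier_mat d d"
    and Me: "\<And>p q. p < d \<Longrightarrow> q < d \<Longrightarrow> M $$ (p,q) = (\<Sum>x\<in>A. c x * f x $$ (p,q))"
    and r: "r < d" and s: "s < d"
  shows "twirl d G M $$ (r,s) = (\<Sum>x\<in>A. c x * twirl d G (f x) $$ (r,s))"
proof -
  define cc where "cc = 1 / (of_nat (card G) :: complex)"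
  have "twirl d G M $$ (r,s) = cc * (\<Sum>U\<in>G. \<Sum>p<d. \<Sum>q<d. U $$ (r,p) * M $$ (p,q) * cnj (U $$ (s,q)))"
    using twirl_entry[OF M r s] by (simp add: cc_def)
  also have "\<dots> = cc * (\<Sum>U\<in>G. \<Sum>p<d. \<Sum>q<d. \<Sum>x\<in>A. c x * (U $$ (r,p) * f x $$ (p,q) * cnj (U $$ (s,q))))"
    using Me by (simp add: sum_distrib_left sum_distrib_right ac_simps)
  also have "\<dots> = cc * (\<Sum>U\<in>G. \<Sum>x\<in>A. \<Sum>p<d. \<Sum>q<d. c x * (U $$ (r,p) * f x $$ (p,q) * cnj (U $$ (s,q))))"
    by (subst sum_swap3) (rule refl)
  also have "\<dots> = cc * (\<Sum>x\<in>A. \<Sum>U\<in>G. \<Sum>p<d. \<Sum>q<d. c x * (U $$ (r,p) * f x $$ (p,q) * cnj (U $$ (s,q))))"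
    by (subst sum.swap) (rule refl)
  also have "\<dots> = (\<Sum>x\<in>A. c x * (cc * (\<Sum>U\<in>G. \<Sum>p<d. \<Sum>q<d. U $$ (r,p) * f x $$ (p,q) * cnj (U $$ (s,q)))))"
    by (simp add: sum_distrib_left ac_simps)
  also have "\<dots> = (\<Sum>x\<in>A. c x * twirl d G (f x) $$ (r,s))"
    using twirl_entry[OF f r s] by (simp add: cc_def)
  finally show ?thesis .
qed

lemma twirl_sum_list_entry:
  assumes f: "set (map snd ps) \<subseteq> carrier_mat d d"
    and M: "M \<in> carrier_mat d d"
    and Me: "\<And>p q. p < d \<Longrightarrow> q < d \<Longrightarrow> M $$ (p,q) = (\<Sum>x\<leftarrow>ps. fst x * snd x $$ (p,q))"
    and r: "r < d" and s: "s < d"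
  shows "twirl d G M $$ (r,s) = (\<Sum>x\<leftarrow>ps. fst x * twirl d G (snd x) $$ (r,s))"
proof -
  have "twirl d G M $$ (r,s) = (\<Sum>k\<in>{..<length ps}. fst (ps!k) * twirl d G (snd (ps!k)) $$ (r,s))"
  proof (rule twirl_sum_entry[OF _ _ M _ r s])
    fix k assume "k \<in> {..<length ps}" then show "snd (ps!k) \<in> carrier_mat d d" using f by auto
  next
    fix p q assume "p < d" "q < d"
    then show "M $$ (p,q) = (\<Sum>k\<in>{..<length ps}. fst (ps!k) * snd (ps!k) $$ (p,q))"
      using Me by (simp add: sum_list_sum_nth lessThan_atLeast0)
  qed simp
  then show ?thesis by (simp add: sum_list_sum_nth lessThan_atLeast0)
qed

lemma inj_on_left_mult: assumes V: "V \<in> G" shows "inj_on (\<lambda>U. V * U) G"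
proof (rule inj_onI)
  fix U1 U2 assume U1: "U1 \<in> G" and U2: "U2 \<in> G" and e: "V * U1 = V * U2"
  have Vc: "V \<in> carrier_mat d d" and U1c: "U1 \<in> carrier_mat d d" and U2c: "U2 \<in> carrier_mat d d"
    using G_carrier_mat V U1 U2 by auto
  have dv: "dag V * V = 1\<^sub>m d" using unit V by (auto simp: unitary_def)
  have "U1 = (dag V * V) * U1" using dv U1c by simp
  also have "\<dots> = dag V * (V * U1)" using Vc U1c by (intro assoc_mult_mat) auto
  also have "\<dots> = dag V * (V * U2)" using e by simp
  also have "\<dots> = (dag V * V) * U2" using Vc U2c by (intro assoc_mult_mat[symmetric]) auto
  also have "\<dots> = U2" using dv U2c by simp
  finally show "U1 = U2" .
qed

lemma bij_betw_left_mult: assumes V: "V \<in> G" shows "bij_betw (\<lambda>U. V * U) G G"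
proof -
  have "(\<lambda>U. V * U) ` G = G" using endo_inj_surj[OF finG _ inj_on_left_mult[OF V]] mult V by auto
  then show ?thesis using inj_on_left_mult[OF V] by (simp add: bij_betw_def)
qed

lemma conj_twirl_invariant: assumes V: "V \<in> G" and A: "A \<in> carrier_mat d d"
  shows "V * twirl d G A * dag V = twirl d G A"
proof (rule eq_matI)
  have Vc: "V \<in> carrier_mat d d" using G_carrier_mat V .
  fix r s assume "r < dim_row (twirl d G A)" "s < dim_col (twirl d G A)"
  then have r: "r < d" and s: "s < d" by auto
  define c where "c = 1 / (of_nat (card G) :: complex)"
  let ?h = "\<lambda>U p q. (U * A * dag U) $$ (p,q)"
  have "(V * twirl d G A * dag V) $$ (r,s) = (\<Sum>p<d. \<Sum>q<d. V $$ (r,p) * twirl d G A $$ (p,q) * cnj (V $$ (s,q)))"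
    using index_sandwich[OF Vc twirl_carrier r s] .
  also have "\<dots> = (\<Sum>p<d. \<Sum>q<d. V $$ (r,p) * (c * (\<Sum>U\<in>G. ?h U p q)) * cnj (V $$ (s,q)))"
    by (intro sum.cong refl) (simp add: twirl_def c_def)
  also have "\<dots> = (\<Sum>p<d. \<Sum>q<d. \<Sum>U\<in>G. c * (V $$ (r,p) * ?h U p q * cnj (V $$ (s,q))))"
    by (intro sum.cong refl) (simp add: sum_distrib_left sum_distrib_right ac_simps)
  also have "\<dots> = c * (\<Sum>U\<in>G. \<Sum>p<d. \<Sum>q<d. V $$ (r,p) * ?h U p q * cnj (V $$ (s,q)))"
    by (subst sum_swap3) (simp add: sum_distrib_left)
  also have "\<dots> = c * (\<Sum>U\<in>G. ((V * U) * A * dag (V * U)) $$ (r,s))"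
  proof -
    have "(\<Sum>p<d. \<Sum>q<d. V $$ (r,p) * ?h U p q * cnj (V $$ (s,q))) = ((V * U) * A * dag (V * U)) $$ (r,s)"
      if U: "U \<in> G" for U
    proof -
      have Uc: "U \<in> carrier_mat d d" using G_carrier_mat U .
      have "U * A * dag U \<in> carrier_mat d d" using Uc A by auto
      then show ?thesis using index_sandwich[OF Vc _ r s] sandwich_mult[OF Vc Uc A] by simp
    qed
    then show ?thesis by simp
  qed
  also have "\<dots> = c * (\<Sum>U\<in>G. (U * A * dag U) $$ (r,s))"
    using sum.reindex_bij_betw[OF bij_betw_left_mult[OF V], of "\<lambda>U. (U * A * dag U) $$ (r,s)"] by simp
  also have "\<dots> = twirl d G A $$ (r,s)" using r s by (simp add: twirl_def c_def)
  finally show "(V * twirl d G A * dag V) $$ (r,s) = twirl d G A $$ (r,s)" .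
qed (use G_carrier_mat V in auto)

lemma twirl_idem: assumes A: "A \<in> carrier_mat d d"
  shows "twirl d G (twirl d G A) = twirl d G A"
proof (rule eq_matI)
  fix r s assume "r < dim_row (twirl d G A)" "s < dim_col (twirl d G A)"
  then have r: "r < d" and s: "s < d" by auto
  have "twirl d G (twirl d G A) $$ (r,s) = 1 / of_nat (card G) * (\<Sum>V\<in>G. (V * twirl d G A * dag V) $$ (r,s))"
    using r s by (simp add: twirl_def)
  also have "\<dots> = 1 / of_nat (card G) * (\<Sum>V\<in>G. twirl d G A $$ (r,s))"
    using conj_twirl_invariant[OF _ A] by simp
  also have "\<dots> = twirl d G A $$ (r,s)" using card_G_pos by simp
  finally show "twirl d G (twirl d G A) $$ (r,s) = twirl d G A $$ (r,s)" .
qed auto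

lemma id_tensor_twirl_entry:
  assumes X: "X \<in> carrier_mat (k*d) (k*d)" and i: "i < k*d" and j: "j < k*d"
  shows "id_tensor k d (twirl d G) X $$ (i,j) =
    1 / of_nat (card G) * (\<Sum>U\<in>G. (id_kron k d U * X * dag (id_kron k d U)) $$ (i,j))"
proof -
  have "d > 0" using i by (cases d) auto
  then have "i mod d < d" "j mod d < d" by auto
  then show ?thesis
    using i j id_kron_sandwich_entry[OF G_carrier_mat X i j]
    by (simp add: id_tensor_def twirl_def)
qed

lemma twirl_completely_positive: assumes X: "psd (k*d) X"
  shows "psd (k*d) (id_tensor k d (twirl d G) X)"
proof (rule psd_scaled_sum)
  show "psd (k*d) (id_kron k d U * X * dag (id_kron k d U))" for U
    using psd_sandwich[OF X id_kron_carrier] .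
  have "X \<in> carrier_mat (k*d) (k*d)" using X by (simp add: psd_def)
  then show "id_tensor k d (twirl d G) X $$ (i,j) =
      1 / of_nat (card G) * (\<Sum>U\<in>G. (id_kron k d U * X * dag (id_kron k d U)) $$ (i,j))"
    if "i < k*d" "j < k*d" for i j
    using id_tensor_twirl_entry that by blast
qed (simp add: id_tensor_def)

lemma id_tensor_one: assumes A: "A \<in> carrier_mat d d"
  shows "id_tensor 1 d (twirl d G) A = twirl d G A"
proof (rule eq_matI)
  fix i j assume "i < dim_row (twirl d G A)" "j < dim_col (twirl d G A)"
  then have i: "i < d" and j: "j < d" by auto
  have "block d A (i div d) (j div d) = A" using i j A by (auto simp: block_def intro!: eq_matI)
  then show "id_tensor 1 d (twirl d G) A $$ (i,j) = twirl d G A $$ (i,j)"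
    using i j by (simp add: id_tensor_def)
qed (auto simp: id_tensor_def)

lemma twirl_psd: "psd d A \<Longrightarrow> psd d (twirl d G A)"
  using twirl_completely_positive[of 1 A] id_tensor_one[of A] by (simp add: psd_def)

lemma twirl_density: "\<rho> \<in> density_ops d \<Longrightarrow> twirl d G \<rho> \<in> density_ops d"
  using twirl_psd twirl_trace by (auto simp: density_ops_def psd_def)

abbreviation "free_states \<equiv> twirl d G ` density_ops d"

lemma free_state_fixed: "\<sigma> \<in> free_states \<Longrightarrow> twirl d G \<sigma> = \<sigma>"
  using twirl_idem by (auto simp: density_ops_def psd_def)

lemma free_state_density: "\<sigma> \<in> free_states \<Longrightarrow> \<sigma> \<in> density_ops d"
  using twirl_density by auto

lemma twirl_fixes_Aff:
  assumes "\<rho> \<in> Aff d free_states"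
  shows "twirl d G \<rho> = \<rho>"
proof -
  obtain A t where \<rho>: "\<rho> \<in> density_ops d" and A: "finite A" "A \<subseteq> free_states"
    and e: "\<rho> = mat d d (\<lambda>ij. \<Sum>\<sigma>\<in>A. complex_of_real (t \<sigma>) * \<sigma> $$ ij)"
    using assms unfolding Aff_def mem_Collect_eq by (elim conjE exE)
  have \<rho>c: "\<rho> \<in> carrier_mat d d" using \<rho> by (simp add: density_ops_def psd_def)
  show ?thesis
  proof (rule eq_matI)
    fix r s assume "r < dim_row \<rho>" "s < dim_col \<rho>"
    then have r: "r < d" and s: "s < d" using \<rho>c by auto
    have "twirl d G \<rho> $$ (r,s) = (\<Sum>\<sigma>\<in>A. complex_of_real (t \<sigma>) * twirl d G \<sigma> $$ (r,s))"
    proof (rule twirl_sum_entry[OF A(1) _ \<rho>c _ r s, where f = "\<lambda>x. x"])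
      fix x assume "x \<in> A" then show "x \<in> carrier_mat d d" using A(2) by auto
    next
      fix p q assume "p < d" "q < d"
      then show "\<rho> $$ (p,q) = (\<Sum>x\<in>A. complex_of_real (t x) * x $$ (p,q))"
        by (subst e) simp
    qed
    also have "\<dots> = (\<Sum>\<sigma>\<in>A. complex_of_real (t \<sigma>) * \<sigma> $$ (r,s))"
      using A(2) free_state_fixed by (intro sum.cong refl) (metis subsetD)
    also have "\<dots> = \<rho> $$ (r,s)" using r s e by simp
    finally show "twirl d G \<rho> $$ (r,s) = \<rho> $$ (r,s)" .
  qed (use \<rho>c in simp_all)
qed

lemma affine_free_states: "affine_set d free_states"
proof -
  have "Aff d free_states \<subseteq> free_states"
  proof
    fix \<rho> assume \<rho>: "\<rho> \<in> Aff d free_states"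
    then have "twirl d G \<rho> \<in> free_states" by (auto simp: Aff_def)
    then show "\<rho> \<in> free_states" using twirl_fixes_Aff[OF \<rho>] by simp
  qed
  moreover have "free_states \<subseteq> Aff d free_states"
    by (rule subset_Aff) (auto intro: free_state_density)
  ultimately show ?thesis unfolding affine_set_def by blast
qed

lemma twirl_resource_destroying: "resource_destroying d free_states (twirl d G)"
proof -
  have lin: "linear_map d (twirl d G)"
    unfolding linear_map_def
  proof (intro conjI ballI allI)
    fix A :: "complex mat" assume "A \<in> carrier_mat d d" then show "twirl d G A \<in> carrier_mat d d" by simp
  next
    fix A B :: "complex mat" assume "A \<in> carrier_mat d d" "B \<in> carrier_mat d d"
    then show "twirl d G (A + B) = twirl d G A + twirl d G B" by (rule twirl_add)
  next
    fix A :: "complex mat" and c :: complex assume "A \<in> carrier_mat d d"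
    then show "twirl d G (c \<cdot>\<^sub>m A) = c \<cdot>\<^sub>m twirl d G A" by (rule twirl_smult)
  qed
  have cp: "\<forall>k X. psd (k*d) X \<longrightarrow> psd (k*d) (id_tensor k d (twirl d G) X)"
    using twirl_completely_positive by blast
  have tp: "\<forall>A \<in> carrier_mat d d. tr (twirl d G A) = tr A" using twirl_trace by blast
  have "CPTP d (twirl d G)" unfolding CPTP_def using lin cp tp by (intro conjI)
  moreover have "\<forall>\<rho> \<in> density_ops d. twirl d G \<rho> \<in> free_states" by blast
  moreover have "\<forall>\<sigma> \<in> free_states. twirl d G \<sigma> = \<sigma>" using free_state_fixed by blast
  ultimately show ?thesis unfolding resource_destroying_def by (intro conjI)
qed

lemma twirl_lin_comb_free_states:
  assumes M: "M \<in> carrier_mat d d" and comb: "lin_comb d (density_ops d) (\<lambda>i j. M $$ (i,j))"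
  shows "lin_comb d free_states (\<lambda>r s. twirl d G M $$ (r,s))"
proof -
  obtain ps where ps: "set (map snd ps) \<subseteq> density_ops d"
    "\<forall>i<d. \<forall>j<d. M $$ (i,j) = (\<Sum>p\<leftarrow>ps. fst p * snd p $$ (i,j))"
    using comb unfolding lin_comb_def by blast
  have f: "set (map snd ps) \<subseteq> carrier_mat d d" using ps(1) by (auto simp: density_ops_def psd_def)
  let ?qs = "map (\<lambda>x. (fst x, twirl d G (snd x))) ps"
  show ?thesis unfolding lin_comb_def
  proof (intro exI[of _ ?qs] conjI allI impI)
    show "set (map snd ?qs) \<subseteq> free_states" using ps(1) by auto
  next
    fix r s assume r: "r < d" and s: "s < d"
    have "twirl d G M $$ (r,s) = (\<Sum>x\<leftarrow>ps. fst x * twirl d G (snd x) $$ (r,s))"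
      by (rule twirl_sum_list_entry[OF f M _ r s]) (use ps(2) in simp)
    then show "twirl d G M $$ (r,s) = (\<Sum>p\<leftarrow>?qs. fst p * snd p $$ (r,s))" by (simp add: o_def)
  qed
qed

lemma twirl_matrix_unit_entry:
  assumes a: "a < d" and b: "b < d" and r: "r < d" and s: "s < d"
  shows "twirl d G (matrix_unit d a b) $$ (r,s) = 1 / of_nat (card G) * (\<Sum>U\<in>G. U $$ (r,a) * cnj (U $$ (s,b)))"
  using twirl_entry[of "matrix_unit d a b", OF _ r s]
    sum_delta_pair[OF a b, of "\<lambda>p q. _ $$ (r,p)" "\<lambda>p q. cnj (_ $$ (s,q))"]
  by (simp add: matrix_unit_def)

definition G_tuples :: "nat \<Rightarrow> complex mat list set" where
  "G_tuples N = {Us. length Us = N \<and> set Us \<subseteq> G}"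

lemma G_tuples_0: "G_tuples 0 = {[]}" by (auto simp: G_tuples_def)

lemma G_tuples_Suc: "G_tuples (Suc N) = (\<lambda>(U,Us). U # Us) ` (G \<times> G_tuples N)"
proof
  show "G_tuples (Suc N) \<subseteq> (\<lambda>(U,Us). U # Us) ` (G \<times> G_tuples N)"
  proof
    fix xs assume "xs \<in> G_tuples (Suc N)"
    then obtain y ys where "xs = y # ys" "length ys = N" "set (y # ys) \<subseteq> G"
      unfolding G_tuples_def by (auto simp: length_Suc_conv)
    then show "xs \<in> (\<lambda>(U,Us). U # Us) ` (G \<times> G_tuples N)" by (auto simp: G_tuples_def image_iff)
  qed
qed (auto simp: G_tuples_def)

lemma sum_G_tuples_Suc: "(\<Sum>Us\<in>G_tuples (Suc N). h Us) = (\<Sum>U\<in>G. \<Sum>Us\<in>G_tuples N. h (U # Us))"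
proof -
  have inj: "inj_on (\<lambda>(U,Us). U # Us) (G \<times> G_tuples N)" by (auto simp: inj_on_def)
  have "(\<Sum>Us\<in>G_tuples (Suc N). h Us) = (\<Sum>x\<in>G \<times> G_tuples N. h ((\<lambda>(U,Us). U # Us) x))"
    unfolding G_tuples_Suc using sum.reindex[OF inj, of h] by (simp add: o_def)
  also have "\<dots> = (\<Sum>U\<in>G. \<Sum>Us\<in>G_tuples N. h (U # Us))"
    by (simp add: sum.cartesian_product split_def)
  finally show ?thesis .
qed

lemma G_tuples_kron_carrier: "Us \<in> G_tuples N \<Longrightarrow> kron_list Us \<in> carrier_mat (d^N) (d^N)"
  using kron_list_carrier[of Us d] G_carrier_mat by (auto simp: G_tuples_def)

lemma twirl_tensor_entry: assumes X: "X \<in> carrier_mat (d^N) (d^N)" and i: "i < d^N" and j: "j < d^N"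
  shows "twirl_tensor d G N X $$ (i,j) = 1 / of_nat (card G ^ N) *
    (\<Sum>Us\<in>G_tuples N. \<Sum>a<d^N. \<Sum>b<d^N. kron_list Us $$ (i,a) * X $$ (a,b) * cnj (kron_list Us $$ (j,b)))"
proof -
  have "twirl_tensor d G N X $$ (i,j) = 1 / of_nat (card G ^ N) *
     (\<Sum>Us\<in>G_tuples N. (kron_list Us * X * dag (kron_list Us)) $$ (i,j))"
    using i j by (simp add: twirl_tensor_def G_tuples_def)
  also have "\<dots> = 1 / of_nat (card G ^ N) *
    (\<Sum>Us\<in>G_tuples N. \<Sum>a<d^N. \<Sum>b<d^N. kron_list Us $$ (i,a) * X $$ (a,b) * cnj (kron_list Us $$ (j,b)))"
    using index_sandwich[OF G_tuples_kron_carrier X i j] by simp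
  finally show ?thesis .
qed

lemma twirl_tensor_Suc_entry:
  assumes X: "X \<in> carrier_mat (d * d^N) (d * d^N)" and i: "i < d * d^N" and j: "j < d * d^N"
  shows "twirl_tensor d G (Suc N) X $$ (i,j) = (\<Sum>a1<d. \<Sum>b1<d. twirl d G (matrix_unit d a1 b1) $$ (i div d^N, j div d^N) *
      twirl_tensor d G N (block (d^N) X a1 b1) $$ (i mod d^N, j mod d^N))"
proof -
  let ?D = "d^N"
  let ?P = "\<lambda>U a1 b1. U $$ (i div ?D, a1) * cnj (U $$ (j div ?D, b1))"
  let ?Q = "\<lambda>Us a1 b1 a2 b2. kron_list Us $$ (i mod ?D, a2) * X $$ (a1 * ?D + a2, b1 * ?D + b2) * cnj (kron_list Us $$ (j mod ?D, b2))"
  have Dpos: "?D > 0" using i by (metis mult_0_right not_less_zero gr0I)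
  have iD: "i div ?D < d" "i mod ?D < ?D" and jD: "j div ?D < d" "j mod ?D < ?D"
    using i j Dpos by (auto simp: less_mult_imp_div_less mult.commute[of d])
  have XS: "X \<in> carrier_mat (d^Suc N) (d^Suc N)" and iS: "i < d^Suc N" and jS: "j < d^Suc N" using X i j by auto
  have cc: "1 / of_nat (card G ^ Suc N) = 1 / of_nat (card G) * (1 / (of_nat (card G ^ N) :: complex))" by simp
  have "twirl_tensor d G (Suc N) X $$ (i,j) = 1 / of_nat (card G ^ Suc N) *
    (\<Sum>Us\<in>G_tuples (Suc N). \<Sum>a<d^Suc N. \<Sum>b<d^Suc N. kron_list Us $$ (i,a) * X $$ (a,b) * cnj (kron_list Us $$ (j,b)))"
    using twirl_tensor_entry[OF XS iS jS] .
  also have "\<dots> = 1 / of_nat (card G ^ Suc N) *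
    (\<Sum>U\<in>G. \<Sum>Us\<in>G_tuples N. \<Sum>a<d * ?D. \<Sum>b<d * ?D. kron U (kron_list Us) $$ (i,a) * X $$ (a,b) * cnj (kron U (kron_list Us) $$ (j,b)))"
    by (simp add: sum_G_tuples_Suc)
  also have "\<dots> = 1 / of_nat (card G ^ Suc N) *
    (\<Sum>U\<in>G. \<Sum>Us\<in>G_tuples N. \<Sum>a1<d. \<Sum>b1<d. \<Sum>a2<?D. \<Sum>b2<?D. ?P U a1 b1 * ?Q Us a1 b1 a2 b2)"
    using kron_sandwich_entry_sum[OF G_carrier_mat G_tuples_kron_carrier i j] by simp
  also have "\<dots> = 1 / of_nat (card G ^ Suc N) *
    (\<Sum>a1<d. \<Sum>b1<d. \<Sum>U\<in>G. \<Sum>Us\<in>G_tuples N. \<Sum>a2<?D. \<Sum>b2<?D. ?P U a1 b1 * ?Q Us a1 b1 a2 b2)"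
    using sum_swap4[where f = "\<lambda>U Us a1 b1. \<Sum>a2<?D. \<Sum>b2<?D. ?P U a1 b1 * ?Q Us a1 b1 a2 b2" and A = G and B = "G_tuples N" and C = "{..<d}" and E = "{..<d}"]
    by simp
  also have "\<dots> = (\<Sum>a1<d. \<Sum>b1<d. (1 / of_nat (card G) * (\<Sum>U\<in>G. ?P U a1 b1)) *
       (1 / of_nat (card G ^ N) * (\<Sum>Us\<in>G_tuples N. \<Sum>a2<?D. \<Sum>b2<?D. ?Q Us a1 b1 a2 b2)))"
    unfolding sum_mult_sum_scaled cc by (simp only: sum_distrib_left)
  also have "\<dots> = (\<Sum>a1<d. \<Sum>b1<d. twirl d G (matrix_unit d a1 b1) $$ (i div ?D, j div ?D) *
      twirl_tensor d G N (block ?D X a1 b1) $$ (i mod ?D, j mod ?D))"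
  proof (intro sum.cong refl)
    fix a1 b1 assume a1: "a1 \<in> {..<d}" and b1: "b1 \<in> {..<d}"
    have B: "block ?D X a1 b1 \<in> carrier_mat ?D ?D" by (simp add: block_def)
    have "twirl_tensor d G N (block ?D X a1 b1) $$ (i mod ?D, j mod ?D) =
      1 / of_nat (card G ^ N) * (\<Sum>Us\<in>G_tuples N. \<Sum>a2<?D. \<Sum>b2<?D. kron_list Us $$ (i mod ?D, a2) * block ?D X a1 b1 $$ (a2,b2) * cnj (kron_list Us $$ (j mod ?D, b2)))"
      using twirl_tensor_entry[OF B iD(2) jD(2)] .
    also have "\<dots> = 1 / of_nat (card G ^ N) * (\<Sum>Us\<in>G_tuples N. \<Sum>a2<?D. \<Sum>b2<?D. ?Q Us a1 b1 a2 b2)"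
      by (simp add: block_def)
    finally show "(1 / of_nat (card G) * (\<Sum>U\<in>G. ?P U a1 b1)) *
       (1 / of_nat (card G ^ N) * (\<Sum>Us\<in>G_tuples N. \<Sum>a2<?D. \<Sum>b2<?D. ?Q Us a1 b1 a2 b2)) =
      twirl d G (matrix_unit d a1 b1) $$ (i div ?D, j div ?D) * twirl_tensor d G N (block ?D X a1 b1) $$ (i mod ?D, j mod ?D)"
      using twirl_matrix_unit_entry[OF _ _ iD(1) jD(1)] a1 b1 by simp
  qed
  finally show ?thesis .
qed

lemma free_states_hermitian_trace: "free_states \<subseteq> {\<sigma> \<in> carrier_mat d d. dag \<sigma> = \<sigma> \<and> tr \<sigma> = 1}"
proof
  fix \<sigma> assume "\<sigma> \<in> free_states"
  then have "\<sigma> \<in> density_ops d" by (rule free_state_density)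
  then show "\<sigma> \<in> {\<sigma> \<in> carrier_mat d d. dag \<sigma> = \<sigma> \<and> tr \<sigma> = 1}" by (simp add: density_ops_def psd_def)
qed

lemma twirl_tensor_lin_comb: "X \<in> carrier_mat (d^N) (d^N) \<Longrightarrow> lin_comb (d^N) (tensor_pow N free_states) (\<lambda>i j. twirl_tensor d G N X $$ (i,j))"
proof (induction N arbitrary: X)
  case 0
  show ?case unfolding lin_comb_def
  proof (intro exI[of _ "[(X $$ (0,0), 1\<^sub>m 1)]"] conjI allI impI)
    show "set (map snd [(X $$ (0,0), 1\<^sub>m 1)]) \<subseteq> tensor_pow 0 free_states" using tensor_pow_0 by simp
  next
    fix i j :: nat assume i: "i < d^0" and j: "j < d^0"
    then have "i = 0" "j = 0" by auto
    then show "twirl_tensor d G 0 X $$ (i,j) = (\<Sum>p\<leftarrow>[(X $$ (0,0), 1\<^sub>m 1)]. fst p * snd p $$ (i,j))"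
      using twirl_tensor_entry[OF "0.prems" i j] by (simp add: G_tuples_0)
  qed
next
  case (Suc N)
  let ?D = "d^N"
  let ?S = "{kron \<sigma> \<tau> | \<sigma> \<tau>. \<sigma> \<in> free_states \<and> \<tau> \<in> tensor_pow N free_states}"
  have X: "X \<in> carrier_mat (d * ?D) (d * ?D)" using Suc.prems by simp
  have h: "lin_comb (d * ?D) ?S (\<lambda>i j. twirl d G (matrix_unit d a1 b1) $$ (i div ?D, j div ?D) * twirl_tensor d G N (block ?D X a1 b1) $$ (i mod ?D, j mod ?D))"
    if a1: "a1 < d" and b1: "b1 < d" for a1 b1
  proof (rule lin_comb_kron[of free_states d "tensor_pow N free_states" ?D])
    show "\<And>\<sigma>. \<sigma> \<in> free_states \<Longrightarrow> \<sigma> \<in> carrier_mat d d"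
      using free_states_hermitian_trace by blast
    show "\<And>\<tau>. \<tau> \<in> tensor_pow N free_states \<Longrightarrow> \<tau> \<in> carrier_mat ?D ?D"
      using free_states_hermitian_trace by (intro tensor_pow_carrier) auto
    show "lin_comb d free_states (\<lambda>r s. twirl d G (matrix_unit d a1 b1) $$ (r,s))"
      by (rule twirl_lin_comb_free_states)
        (simp_all add: matrix_unit_def matrix_unit_lin_comb_density[OF a1 b1, unfolded matrix_unit_def])
    have "block ?D X a1 b1 \<in> carrier_mat ?D ?D" by (simp add: block_def)
    then show "lin_comb ?D (tensor_pow N free_states) (\<lambda>i j. twirl_tensor d G N (block ?D X a1 b1) $$ (i,j))"
      by (rule Suc.IH)
  qed
  have "lin_comb (d * ?D) ?S (\<lambda>i j. \<Sum>a1\<in>{..<d}. \<Sum>b1\<in>{..<d}. twirl d G (matrix_unit d a1 b1) $$ (i div ?D, j div ?D) *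
      twirl_tensor d G N (block ?D X a1 b1) $$ (i mod ?D, j mod ?D))"
    by (rule lin_comb_sum, simp, rule lin_comb_sum, simp, rule h) auto
  then have "lin_comb (d * ?D) (tensor_pow (Suc N) free_states) (\<lambda>i j. \<Sum>a1\<in>{..<d}. \<Sum>b1\<in>{..<d}. twirl d G (matrix_unit d a1 b1) $$ (i div ?D, j div ?D) *
      twirl_tensor d G N (block ?D X a1 b1) $$ (i mod ?D, j mod ?D))"
    by (rule lin_comb_mono) (auto intro: kron_mem_tensor_pow_Suc)
  then have "lin_comb (d * ?D) (tensor_pow (Suc N) free_states) (\<lambda>i j. twirl_tensor d G (Suc N) X $$ (i,j))"
    by (rule lin_comb_cong) (rule twirl_tensor_Suc_entry[OF X])
  then show ?case by simp
qed

lemma no_fixed_resource_state: "\<forall>N \<ge> 1. \<not> (\<exists>\<rho> \<in> density_ops (d ^ N).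
              \<rho> \<notin> Aff (d ^ N) (tensor_pow N free_states) \<and> twirl_tensor d G N \<rho> = \<rho>)"
proof (intro allI impI notI)
  fix N :: nat
  assume "\<exists>\<rho> \<in> density_ops (d ^ N). \<rho> \<notin> Aff (d ^ N) (tensor_pow N free_states) \<and> twirl_tensor d G N \<rho> = \<rho>"
  then obtain \<rho> where \<rho>: "\<rho> \<in> density_ops (d ^ N)" and na: "\<rho> \<notin> Aff (d ^ N) (tensor_pow N free_states)"
    and fx: "twirl_tensor d G N \<rho> = \<rho>" by blast
  have \<rho>c: "\<rho> \<in> carrier_mat (d^N) (d^N)" using \<rho> by (simp add: density_ops_def psd_def)
  have "lin_comb (d^N) (tensor_pow N free_states) (\<lambda>i j. \<rho> $$ (i,j))"
    using twirl_tensor_lin_comb[OF \<rho>c] fx by simp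
  then have "\<rho> \<in> Aff (d ^ N) (tensor_pow N free_states)" by (rule hermitian_lin_comb_in_Aff[OF \<rho> tensor_pow_hermitian_trace[OF free_states_hermitian_trace]])
  then show False using na by simp
qed

end

theorem mainTheorem5:
  fixes d :: nat and G :: "complex mat set"
  assumes finG: "finite G"
    and unit: "\<forall>U \<in> G. unitary d U"
    and one: "1\<^sub>m d \<in> G"
    and mult: "\<forall>U \<in> G. \<forall>V \<in> G. U * V \<in> G"
    and inv: "\<forall>U \<in> G. dag U \<in> G"
  shows "affine_set d (twirl d G ` density_ops d) \<and>
         resource_destroying d (twirl d G ` density_ops d) (twirl d G) \<and>
         (\<forall>N \<ge> 1. \<not> (\<exists>\<rho> \<in> density_ops (d ^ N).
              \<rho> \<notin> Aff (d ^ N) (tensor_pow N (twirl d G ` density_ops d)) \<and>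
              twirl_tensor d G N \<rho> = \<rho>))"
proof -
  interpret finite_unitary_group d G using assms by unfold_locales auto
  show ?thesis using affine_free_states twirl_resource_destroying no_fixed_resource_state by blast
qed

end
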